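(* Let $n\ge2$, let $\Omega\subset\mathbb{R}^n$ be a bounded domain with $C^{2+\alpha}$ boundary, $(d_1,d_2,f,\kappa)\in(0,\infty)^4$, and $\varphi\in C_0^\infty(\mathbb{R}^n)$ non-negative, radially symmetric, with support in $B_1(0)$ and non-increasing radial profile. For $j\ge1$ let $\chi_j(x,y):=j^{n+2}\varphi(j(x-y))$, $\Gamma_{\chi_j}z(x):=\int_\Omega\chi_j(x,y)(z(y)-z(x))\,\mathrm{d}y$, and $Y_j[z]:=\int_{\Omega\times\Omega}\chi_j(x,y)[z(x)-z(y)]^2\,\mathrm{d}(x,y)$ for $z\in L_2(\Omega)$. Fix non-negative $(u^0,v^0)\in L_\infty(\Omega)^2$ and let $(u_j,v_j)\in C^1([0,\infty),L_\infty(\Omega)^2)$ be the non-negative solution to $$\partial_t u_j=d_1\Gamma_{\chi_j}u_j-u_jv_j^2+f(1-u_j),\quad \partial_t v_j=d_2\Gamma_{\chi_j}v_j+u_jv_j^2-(f+\kappa)v_j,\quad (u_j,v_j)(0)=(u^0,v^0).$$ Then there is $C_1>0$ depending only on $n,\Omega,d_1,d_2,\varphi,f,\kappa,(u^0,v^0)$ such that for all $t>0$ and $j\ge1$, $$\|u_j(t)\|_2^2+\|v_j(t)\|_2^2\le C_1,\qquad \int_0^t\big(Y_j[u_j(s)]+Y_j[v_j(s)]+\|(u_jv_j)(s)\|_2^2\big)\,\mathrm{d}s\le C_1(1+t).$$ *)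

theory Defs
  imports "HOL-Analysis.Analysis" "HOL-Probability.Essential_Supremum"
begin

text \<open>P xs is the partial derivative along the coordinate directions in xs
  (the head of the list being the outermost derivative).\<close>
definition smooth_fun :: "(real^'n \<Rightarrow> real) \<Rightarrow> bool" where
  "smooth_fun g \<longleftrightarrow> (\<exists>P :: 'n list \<Rightarrow> real^'n \<Rightarrow> real.
      P [] = g \<and> (\<forall>is. continuous_on UNIV (P is)) \<and>
      (\<forall>is i x. ((\<lambda>t. P is (x + t *\<^sub>R axis i 1)) has_real_derivative P (i # is) x) (at 0)))"

text \<open>C^{2+alpha} boundary, via local defining functions: near every boundary point p
  the domain is the sublevel set rho < 0 of a C^{2,alpha} function rho with nonvanishing
  gradient g and Hessian H which is alpha-Hoelder continuous.\<close>
definition C2alpha_boundary :: "(real^'n) set \<Rightarrow> real \<Rightarrow> bool" where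
  "C2alpha_boundary \<Omega> \<alpha> \<longleftrightarrow> (\<forall>p\<in>frontier \<Omega>. \<exists>r>0. \<exists>(\<rho>::real^'n \<Rightarrow> real) g H (L::real).
      (\<forall>x\<in>ball p r. (\<rho> has_derivative (\<lambda>h. g x \<bullet> h)) (at x) \<and>
                     (g has_derivative (\<lambda>h. (H x :: real^'n^'n) *v h)) (at x) \<and> g x \<noteq> 0) \<and>
      (\<forall>x\<in>ball p r. \<forall>y\<in>ball p r. \<forall>i k. \<bar>H x $ i $ k - H y $ i $ k\<bar> \<le> L * dist x y powr \<alpha>) \<and>
      \<Omega> \<inter> ball p r = {x\<in>ball p r. \<rho> x < 0})"

definition Linf_norm :: "(real^'n) set \<Rightarrow> (real^'n \<Rightarrow> real) \<Rightarrow> ereal" where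
  "Linf_norm \<Omega> z = esssup (restrict_space lebesgue \<Omega>) (\<lambda>x. ereal \<bar>z x\<bar>)"

definition Linf :: "(real^'n) set \<Rightarrow> (real^'n \<Rightarrow> real) set" where
  "Linf \<Omega> = {z. z \<in> borel_measurable (restrict_space lebesgue \<Omega>) \<and> Linf_norm \<Omega> z < \<infinity>}"

definition Linf_C1 :: "(real^'n) set \<Rightarrow> (real \<Rightarrow> real^'n \<Rightarrow> real) \<Rightarrow> (real \<Rightarrow> real^'n \<Rightarrow> real) \<Rightarrow> bool" where
  "Linf_C1 \<Omega> u u' \<longleftrightarrow>
     (\<forall>t\<ge>0. u t \<in> Linf \<Omega> \<and> u' t \<in> Linf \<Omega>) \<and>
     (\<forall>t\<ge>0. ((\<lambda>h. Linf_norm \<Omega> (\<lambda>x. (u (t + h) x - u t x) / h - u' t x)) \<longlongrightarrow> 0)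
               (at 0 within {-t..})) \<and>
     (\<forall>t\<ge>0. ((\<lambda>s. Linf_norm \<Omega> (\<lambda>x. u' s x - u' t x)) \<longlongrightarrow> 0) (at t within {0..}))"

definition kernel :: "(real^'n \<Rightarrow> real) \<Rightarrow> nat \<Rightarrow> real^'n \<Rightarrow> real^'n \<Rightarrow> real" where
  "kernel \<phi> j x y = real j ^ (CARD('n) + 2) * \<phi> (real j *\<^sub>R (x - y))"

definition Gamma :: "(real^'n) set \<Rightarrow> (real^'n \<Rightarrow> real) \<Rightarrow> nat \<Rightarrow> (real^'n \<Rightarrow> real) \<Rightarrow> real^'n \<Rightarrow> real" where
  "Gamma \<Omega> \<phi> j z x = (LINT y:\<Omega>|lebesgue. kernel \<phi> j x y * (z y - z x))"

definition Yfun :: "(real^'n) set \<Rightarrow> (real^'n \<Rightarrow> real) \<Rightarrow> nat \<Rightarrow> (real^'n \<Rightarrow> real) \<Rightarrow> ennreal" where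
  "Yfun \<Omega> \<phi> j z = (\<integral>\<^sup>+ p\<in>\<Omega> \<times> \<Omega>. ennreal (kernel \<phi> j (fst p) (snd p) * (z (fst p) - z (snd p))^2)
                       \<partial>(lebesgue \<Otimes>\<^sub>M lebesgue))"

definition L2sq :: "(real^'n) set \<Rightarrow> (real^'n \<Rightarrow> real) \<Rightarrow> ennreal" where
  "L2sq \<Omega> z = (\<integral>\<^sup>+ x\<in>\<Omega>. ennreal ((z x)^2) \<partial>lebesgue)"

definition is_solution :: "(real^'n) set \<Rightarrow> (real^'n \<Rightarrow> real) \<Rightarrow> real \<Rightarrow> real \<Rightarrow> real \<Rightarrow> real \<Rightarrow>
    (real^'n \<Rightarrow> real) \<Rightarrow> (real^'n \<Rightarrow> real) \<Rightarrow> nat \<Rightarrow>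
    (real \<Rightarrow> real^'n \<Rightarrow> real) \<Rightarrow> (real \<Rightarrow> real^'n \<Rightarrow> real) \<Rightarrow> bool" where
  "is_solution \<Omega> \<phi> d1 d2 f \<kappa> u0 v0 j u v \<longleftrightarrow>
     (\<exists>u' v'. Linf_C1 \<Omega> u u' \<and> Linf_C1 \<Omega> v v' \<and>
        (\<forall>t\<ge>0. AE x\<in>\<Omega> in lebesgue. u t x \<ge> 0 \<and> v t x \<ge> 0) \<and>
        (\<forall>t\<ge>0. AE x\<in>\<Omega> in lebesgue.
            u' t x = d1 * Gamma \<Omega> \<phi> j (u t) x - u t x * (v t x)^2 + f * (1 - u t x)) \<and>
        (\<forall>t\<ge>0. AE x\<in>\<Omega> in lebesgue.
            v' t x = d2 * Gamma \<Omega> \<phi> j (v t) x + u t x * (v t x)^2 - (f + \<kappa>) * v t x) \<and>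
        (AE x\<in>\<Omega> in lebesgue. u 0 x = u0 x \<and> v 0 x = v0 x))"

end

theory Submission
  imports Defs
begin

text \<open>
  With the weight \<alpha> = (d1 + d2)^2 / (d1 d2), the energy E = \<integral> \<alpha> u^2 + (u + v)^2 of a solution obeys
  E' \<le> - c (Y[u] + Y[v] + \<parallel>u v\<parallel>^2) - f E + C with c and C independent of j.  The Green identity
  \<integral> g \<Gamma>z = - 1/2 \<integral>\<integral> \<chi>(x, y) (g(x) - g(y)) (z(x) - z(y)) turns the diffusion terms into nonlocal
  forms, and the choice of \<alpha> makes the resulting quadratic form dominate c (Y[u] + Y[v]).  In the
  reaction terms the cubic u v^2 cancels from the equation for u + v, leaving - 2 \<alpha> u^2 v^2 and
  terms bounded by - f E + C.  Comparison with the linear ODE bounds E by max (E(0)) (C / f), and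
  integrating the inequality bounds the integrated dissipation by (E(0) + C t) / c.
\<close>

lemma sigma_finite_lebesgue: "sigma_finite_measure (lebesgue :: 'a::euclidean_space measure)"
proof -
  obtain C :: "'a set set" where "countable C" "C \<subseteq> sets lborel" "\<Union>C = space lborel"
      "\<forall>a\<in>C. emeasure lborel a \<noteq> \<infinity>"
    using sigma_finite_measure.sigma_finite_countable[OF sigma_finite_lborel] by blast
  then show ?thesis
    unfolding sigma_finite_measure_def by (intro exI[of _ C]) (auto simp: subset_eq)
qed

interpretation lebesgue_pair: pair_sigma_finite "lebesgue :: 'a::euclidean_space measure" lebesgue
  by (simp add: pair_sigma_finite_def sigma_finite_lebesgue)

lemma Linf_measurable: "g \<in> Linf \<Omega> \<Longrightarrow> g \<in> borel_measurable (lebesgue_on \<Omega>)"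
  by (simp add: Linf_def)

lemma AE_abs_le_Linf_norm:
  assumes "Linf_norm \<Omega> g \<le> ereal B"
  shows "AE x in lebesgue_on \<Omega>. \<bar>g x\<bar> \<le> B"
proof -
  have "AE x in lebesgue_on \<Omega>. ereal \<bar>g x\<bar> \<le> Linf_norm \<Omega> g"
    unfolding Linf_norm_def by (rule esssup_AE)
  then show ?thesis
    by eventually_elim (use assms in \<open>metis ereal_less_eq(3) order.trans\<close>)
qed

lemma Linf_AE_bounded:
  assumes "g \<in> Linf \<Omega>"
  obtains B where "B \<ge> 0" "AE x in lebesgue_on \<Omega>. \<bar>g x\<bar> \<le> B"
proof -
  have "Linf_norm \<Omega> g < \<infinity>" using assms by (simp add: Linf_def)
  then obtain B where "Linf_norm \<Omega> g \<le> ereal B" "B \<ge> 0"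
    by (cases "Linf_norm \<Omega> g") (auto intro: max.cobounded1 max.cobounded2)
  with that show ?thesis using AE_abs_le_Linf_norm by blast
qed

text \<open>An element of Linf is only measurable on \<Omega> and bounded almost everywhere there; the Fubini
  arguments on \<Omega> \<times> \<Omega> below are run with an everywhere bounded representative on the whole space.\<close>

lemma Linf_bounded_representative:
  assumes "\<Omega> \<in> sets lebesgue" "g \<in> Linf \<Omega>"
  obtains g' B where "g' \<in> borel_measurable lebesgue" "\<And>x. \<bar>g' x\<bar> \<le> B"
    "AE x in lebesgue_on \<Omega>. g' x = g x"
proof -
  obtain B where B: "B \<ge> 0" "AE x in lebesgue_on \<Omega>. \<bar>g x\<bar> \<le> B"
    using Linf_AE_bounded[OF assms(2)] .
  define g' where "g' x = indicator \<Omega> x * max (- B) (min B (g x))" for x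
  have "(\<lambda>x. max (- B) (min B (g x))) \<in> borel_measurable (lebesgue_on \<Omega>)"
    using Linf_measurable[OF assms(2)] by measurable
  then have "g' \<in> borel_measurable lebesgue"
    unfolding g'_def[abs_def] using assms(1) by (simp add: borel_measurable_restrict_space_iff)
  moreover have "\<bar>g' x\<bar> \<le> B" for x
    using B(1) by (auto simp: g'_def indicator_def)
  moreover have "AE x in lebesgue_on \<Omega>. g' x = g x"
    using B(2) AE_space[of "lebesgue_on \<Omega>"]
    by eventually_elim (use assms(1) in \<open>auto simp: g'_def space_restrict_space\<close>)
  ultimately show ?thesis using that by blast
qed

lemma Linf_bounded_representatives:
  assumes "\<Omega> \<in> sets lebesgue" "a \<in> Linf \<Omega>" "b \<in> Linf \<Omega>"
  obtains a0 B b0 where "a0 \<in> borel_measurable lebesgue" "\<And>x. \<bar>a0 x\<bar> \<le> B"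
    "b0 \<in> borel_measurable lebesgue" "\<And>x. \<bar>b0 x\<bar> \<le> B"
    "AE x in lebesgue_on \<Omega>. a x = a0 x \<and> b x = b0 x"
proof -
  obtain a0 Ba where a0: "a0 \<in> borel_measurable lebesgue" "\<And>x. \<bar>a0 x\<bar> \<le> Ba"
      "AE x in lebesgue_on \<Omega>. a0 x = a x"
    using Linf_bounded_representative[OF assms(1,2)] by blast
  obtain b0 Bb where b0: "b0 \<in> borel_measurable lebesgue" "\<And>x. \<bar>b0 x\<bar> \<le> Bb"
      "AE x in lebesgue_on \<Omega>. b0 x = b x"
    using Linf_bounded_representative[OF assms(1,3)] by blast
  have "\<bar>a0 x\<bar> \<le> max Ba Bb" "\<bar>b0 x\<bar> \<le> max Ba Bb" for x
    using a0(2)[of x] b0(2)[of x] by auto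
  moreover have "AE x in lebesgue_on \<Omega>. a x = a0 x \<and> b x = b0 x"
    using a0(3) b0(3) by eventually_elim simp
  ultimately show ?thesis
    using that a0(1) b0(1) by blast
qed

lemma integrable_mult_Linf:
  assumes "\<Omega> \<in> lmeasurable" "g \<in> Linf \<Omega>" "h \<in> Linf \<Omega>"
  shows "integrable (lebesgue_on \<Omega>) (\<lambda>x. g x * h x)"
proof -
  interpret finite_measure "lebesgue_on \<Omega>"
    using finite_measure_lebesgue_on[OF assms(1)] .
  obtain B1 where B1: "B1 \<ge> 0" "AE x in lebesgue_on \<Omega>. \<bar>g x\<bar> \<le> B1"
    using Linf_AE_bounded[OF assms(2)] .
  obtain B2 where B2: "B2 \<ge> 0" "AE x in lebesgue_on \<Omega>. \<bar>h x\<bar> \<le> B2"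
    using Linf_AE_bounded[OF assms(3)] .
  have "AE x in lebesgue_on \<Omega>. norm (g x * h x) \<le> B1 * B2"
    using B1(2) B2(2) by eventually_elim (use B1 B2 in \<open>auto simp: abs_mult intro!: mult_mono\<close>)
  then show ?thesis
    using Linf_measurable[OF assms(2)] Linf_measurable[OF assms(3)]
    by (intro integrable_const_bound) auto
qed

lemma integrable_continuous_comp_bounded:
  fixes a b :: "'a::euclidean_space \<Rightarrow> real" and \<rho> :: "real \<Rightarrow> real \<Rightarrow> real"
  assumes "\<Omega> \<in> lmeasurable" "continuous_on UNIV (\<lambda>p. \<rho> (fst p) (snd p))"
    and "a \<in> borel_measurable lebesgue" "\<And>x. \<bar>a x\<bar> \<le> B"
    and "b \<in> borel_measurable lebesgue" "\<And>x. \<bar>b x\<bar> \<le> B"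
  shows "integrable (lebesgue_on \<Omega>) (\<lambda>x. \<rho> (a x) (b x))"
proof -
  interpret finite_measure "lebesgue_on \<Omega>"
    using finite_measure_lebesgue_on[OF assms(1)] .
  have "compact ((\<lambda>p. \<rho> (fst p) (snd p)) ` cbox (-B, -B) (B, B))"
    by (rule compact_continuous_image[OF continuous_on_subset[OF assms(2)]]) auto
  then obtain C where C: "\<forall>y \<in> (\<lambda>p. \<rho> (fst p) (snd p)) ` cbox (-B, -B) (B, B). norm y \<le> C"
    using compact_imp_bounded bounded_iff by metis
  have "(a x, b x) \<in> cbox (-B, -B) (B, B)" for x
    using assms(4)[of x] assms(6)[of x] by (auto simp: cbox_Pair_iff abs_le_iff)
  then have "norm (\<rho> (a x) (b x)) \<le> C" for x
    using C by force
  moreover have "(\<lambda>x. (a x, b x)) \<in> borel_measurable lebesgue"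
    using assms(3,5) by measurable
  from measurable_compose[OF this borel_measurable_continuous_onI[OF assms(2)]]
  have "(\<lambda>x. \<rho> (a x) (b x)) \<in> borel_measurable lebesgue"
    by simp
  ultimately show ?thesis
    by (intro integrable_const_bound[where B=C] measurable_restrict_space1) auto
qed

lemma L2sq_eq_integral:
  assumes "\<Omega> \<in> sets lebesgue" "integrable (lebesgue_on \<Omega>) (\<lambda>x. (g x)\<^sup>2)"
  shows "L2sq \<Omega> g = ennreal (\<integral>x. (g x)\<^sup>2 \<partial>lebesgue_on \<Omega>)"
  using assms by (simp add: L2sq_def nn_integral_restrict_space[symmetric] nn_integral_eq_integral)

section \<open>Differential inequalities\<close>

lemma fundamental_theorem_of_calculus_atLeast0:
  fixes F F' :: "real \<Rightarrow> real"
  assumes "\<And>s. s \<ge> 0 \<Longrightarrow> (F has_real_derivative F' s) (at s within {0..})" and "t \<ge> 0"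
  shows "(F' has_integral (F t - F 0)) {0..t}"
proof (rule fundamental_theorem_of_calculus[OF \<open>t \<ge> 0\<close>])
  fix s :: real assume "s \<in> {0..t}"
  have "(F has_real_derivative F' s) (at s within {0..t})"
    by (rule DERIV_subset[OF assms(1)]) (use \<open>s \<in> {0..t}\<close> in auto)
  then show "(F has_vector_derivative F' s) (at s within {0..t})"
    by (simp add: has_real_derivative_iff_has_vector_derivative)
qed

lemma differential_inequality_bound:
  fixes F F' :: "real \<Rightarrow> real"
  assumes "f > 0"
    and deriv: "\<And>s. s \<ge> 0 \<Longrightarrow> (F has_real_derivative F' s) (at s within {0..})"
    and ineq: "\<And>s. s \<ge> 0 \<Longrightarrow> F' s \<le> C - f * F s"
    and "t \<ge> 0"
  shows "F t \<le> max (F 0) (C / f)"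
proof -
  define G where "G s = exp (f * s) * (F s - C / f)" for s
  define G' where "G' s = exp (f * s) * (f * (F s - C / f) + F' s)" for s
  have "(G has_real_derivative G' s) (at s within {0..})" if "s \<ge> 0" for s
    unfolding G_def G'_def by (auto intro!: derivative_eq_intros deriv that simp: algebra_simps)
  then have "(G' has_integral (G t - G 0)) {0..t}"
    using \<open>t \<ge> 0\<close> by (rule fundamental_theorem_of_calculus_atLeast0)
  moreover have "G' s \<le> 0" if "s \<ge> 0" for s
  proof -
    have "f * (F s - C / f) = f * F s - C"
      using \<open>f > 0\<close> by (simp add: field_simps)
    then have "f * (F s - C / f) + F' s \<le> 0"
      using ineq[OF that] by linarith
    then show ?thesis
      unfolding G'_def by (simp add: mult_nonneg_nonpos)
  qed
  ultimately have "G t \<le> G 0"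
    using has_integral_le[of G' "G t - G 0" "{0..t}" "\<lambda>_. 0" 0] by auto
  then have "exp (f * t) * (F t - C / f) \<le> F 0 - C / f"
    by (simp add: G_def)
  moreover have "F t - C / f \<le> exp (f * t) * (F t - C / f)" if "F t - C / f > 0"
    using that \<open>f > 0\<close> \<open>t \<ge> 0\<close> by (simp add: mult_le_cancel_right1)
  ultimately show ?thesis
    by linarith
qed

lemma differential_inequality_integral_bound:
  fixes F F' D :: "real \<Rightarrow> real"
  assumes "c > 0" "f \<ge> 0"
    and deriv: "\<And>s. s \<ge> 0 \<Longrightarrow> (F has_real_derivative F' s) (at s within {0..})"
    and F_nonneg: "\<And>s. s \<ge> 0 \<Longrightarrow> F s \<ge> 0" and D_nonneg: "\<And>s. s \<ge> 0 \<Longrightarrow> D s \<ge> 0"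
    and ineq: "\<And>s. s \<ge> 0 \<Longrightarrow> F' s \<le> - c * D s - f * F s + C"
    and "t \<ge> 0"
  shows "(\<integral>\<^sup>+ s\<in>{0..t}. ennreal (D s) \<partial>lborel) \<le> ennreal ((F 0 + C * t) / c)"
proof -
  define H where "H s = (C - f * F s - F' s) / c" for s
  have "continuous_on {0..t} F"
    unfolding continuous_on_eq_continuous_within
  proof
    fix s assume "s \<in> {0..t}"
    have "(F has_real_derivative F' s) (at s within {0..t})"
      by (rule DERIV_subset[OF deriv]) (use \<open>s \<in> {0..t}\<close> in auto)
    then show "continuous (at s within {0..t}) F"
      by (rule DERIV_continuous)
  qed
  then have "(F has_integral integral {0..t} F) {0..t}"
    by (intro integrable_integral integrable_continuous_interval)
  moreover have "((\<lambda>s. C) has_integral C * t) {0..t}"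
    using has_integral_const_real[of C 0 t] \<open>t \<ge> 0\<close> by (simp add: mult.commute)
  ultimately have "(H has_integral (C * t - f * integral {0..t} F - (F t - F 0)) / c) {0..t}"
    unfolding H_def
    by (intro has_integral_divide has_integral_diff has_integral_mult_right
        fundamental_theorem_of_calculus_atLeast0[OF deriv \<open>t \<ge> 0\<close>])
  moreover have D_le_H: "D s \<le> H s" if "s \<ge> 0" for s
    using ineq[OF that] \<open>c > 0\<close> by (simp add: H_def field_simps)
  ultimately have "(\<integral>\<^sup>+ s. ennreal (H s) * indicator {0..t} s \<partial>lborel)
      = ennreal ((C * t - f * integral {0..t} F - (F t - F 0)) / c)"
    using D_nonneg by (intro nn_integral_has_integral_lebesgue') (auto intro: order_trans[OF _ D_le_H])
  moreover have "(\<integral>\<^sup>+ s\<in>{0..t}. ennreal (D s) \<partial>lborel) \<le> (\<integral>\<^sup>+ s. ennreal (H s) * indicator {0..t} s \<partial>lborel)"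
    using D_le_H by (intro nn_integral_mono) (simp add: indicator_def ennreal_leI)
  moreover have "0 \<le> integral {0..t} F"
    using F_nonneg by (intro integral_nonneg integrable_continuous_interval \<open>continuous_on {0..t} F\<close>) auto
  then have "(C * t - f * integral {0..t} F - (F t - F 0)) / c \<le> (F 0 + C * t) / c"
    using F_nonneg[OF \<open>t \<ge> 0\<close>] \<open>c > 0\<close> \<open>f \<ge> 0\<close> by (intro divide_right_mono) (auto simp: algebra_simps)
  ultimately show ?thesis
    by (metis ennreal_leI order_trans)
qed

section \<open>Differentiating integrals of products\<close>

lemma product_difference_quotient_error:
  fixes a b a' b' a1 b1 h \<epsilon> K :: real
  assumes "h \<noteq> 0" "\<bar>h\<bar> \<le> \<epsilon>" "\<epsilon> \<le> 1"
    and "\<bar>(a1 - a) / h - a'\<bar> \<le> \<epsilon>" "\<bar>(b1 - b) / h - b'\<bar> \<le> \<epsilon>"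
    and "\<bar>a\<bar> \<le> K" "\<bar>b\<bar> \<le> K" "\<bar>a'\<bar> \<le> K" "\<bar>b'\<bar> \<le> K"
  shows "\<bar>(a1 * b1 - a * b) / h - (a' * b + a * b')\<bar> \<le> \<epsilon> * (1 + 4 * K + K\<^sup>2)"
proof -
  define q where "q = (a1 - a) / h - a'"
  define r where "r = (b1 - b) / h - b'"
  have q: "\<bar>q\<bar> \<le> \<epsilon>" and r: "\<bar>r\<bar> \<le> \<epsilon>"
    using assms(4,5) by (simp_all add: q_def r_def)
  have "(a1 * b1 - a * b) / h - (a' * b + a * b') = q * b + h * (q + a') * (r + b') + a * r"
    using assms(1) by (simp add: q_def r_def field_simps)
  moreover have "\<bar>q * b\<bar> \<le> \<epsilon> * K" "\<bar>a * r\<bar> \<le> K * \<epsilon>"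
    unfolding abs_mult using q r assms(6,7) by (auto intro!: mult_mono)
  moreover have "\<bar>h * (q + a') * (r + b')\<bar> \<le> \<epsilon> * (1 + K) * (1 + K)"
  proof -
    have "\<bar>q + a'\<bar> \<le> 1 + K" "\<bar>r + b'\<bar> \<le> 1 + K"
      using q r assms(3,8,9) by linarith+
    then show ?thesis unfolding abs_mult using assms(2) by (intro mult_mono) auto
  qed
  moreover have "\<epsilon> * K + \<epsilon> * (1 + K) * (1 + K) + K * \<epsilon> = \<epsilon> * (1 + 4 * K + K\<^sup>2)"
    by (simp add: algebra_simps power2_eq_square)
  ultimately show ?thesis
    by (smt (verit) abs_triangle_ineq)
qed

lemma Linf_C1_difference_quotient:
  assumes "Linf_C1 \<Omega> u u'" "t \<ge> 0" "\<epsilon> > 0"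
  shows "\<forall>\<^sub>F s in at t within {0..}.
           AE x in lebesgue_on \<Omega>. \<bar>(u s x - u t x) / (s - t) - u' t x\<bar> \<le> \<epsilon>"
proof -
  have "((\<lambda>h. Linf_norm \<Omega> (\<lambda>x. (u (t + h) x - u t x) / h - u' t x)) \<longlongrightarrow> 0) (at 0 within {-t..})"
    using assms(1,2) by (simp add: Linf_C1_def)
  from order_tendstoD(2)[OF this, of "ereal \<epsilon>"] assms(3)
  obtain d where "d > 0" and d: "\<And>h. h \<in> {-t..} \<Longrightarrow> h \<noteq> 0 \<Longrightarrow> dist h 0 < d \<Longrightarrow>
      Linf_norm \<Omega> (\<lambda>x. (u (t + h) x - u t x) / h - u' t x) < ereal \<epsilon>"
    unfolding eventually_at by auto
  show ?thesis
    unfolding eventually_at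
  proof (intro exI[of _ d] conjI ballI impI)
    fix s :: real assume "s \<in> {0..}" "s \<noteq> t \<and> dist s t < d"
    then have "Linf_norm \<Omega> (\<lambda>x. (u (t + (s - t)) x - u t x) / (s - t) - u' t x) < ereal \<epsilon>"
      by (intro d) (auto simp: dist_real_def)
    then show "AE x in lebesgue_on \<Omega>. \<bar>(u s x - u t x) / (s - t) - u' t x\<bar> \<le> \<epsilon>"
      by (intro AE_abs_le_Linf_norm) simp
  qed fact
qed

lemma tendsto_linear_error_bound:
  fixes g :: "'a \<Rightarrow> real"
  assumes "L \<ge> 0" and error: "\<And>\<epsilon>. 0 < \<epsilon> \<Longrightarrow> \<epsilon> \<le> 1 \<Longrightarrow> \<forall>\<^sub>F x in F. \<bar>g x - l\<bar> \<le> \<epsilon> * L"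
  shows "(g \<longlongrightarrow> l) F"
proof (rule tendstoI)
  fix e :: real assume "e > 0"
  define \<epsilon> where "\<epsilon> = min 1 (e / (2 * (L + 1)))"
  have "0 < \<epsilon>" "\<epsilon> \<le> 1"
    using \<open>e > 0\<close> \<open>L \<ge> 0\<close> by (auto simp: \<epsilon>_def)
  have "\<epsilon> * L \<le> e / (2 * (L + 1)) * (L + 1)"
    using \<open>0 < \<epsilon>\<close> \<open>L \<ge> 0\<close> by (intro mult_mono) (auto simp: \<epsilon>_def)
  also have "\<dots> = e / 2"
    using \<open>L \<ge> 0\<close> by (simp add: field_simps)
  also have "\<dots> < e"
    using \<open>e > 0\<close> by simp
  finally have "\<epsilon> * L < e" .
  show "\<forall>\<^sub>F x in F. dist (g x) l < e"
    using error[OF \<open>0 < \<epsilon>\<close> \<open>\<epsilon> \<le> 1\<close>]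
    by eventually_elim (use \<open>\<epsilon> * L < e\<close> in \<open>simp add: dist_real_def\<close>)
qed

lemma integral_mult_difference_quotient_error:
  assumes \<Omega>: "\<Omega> \<in> lmeasurable" and u: "Linf_C1 \<Omega> u u'" and v: "Linf_C1 \<Omega> v v'"
    and "t \<ge> 0" "0 < \<epsilon>" "\<epsilon> \<le> 1"
    and K: "AE x in lebesgue_on \<Omega>. \<bar>u t x\<bar> \<le> K \<and> \<bar>u' t x\<bar> \<le> K \<and> \<bar>v t x\<bar> \<le> K \<and> \<bar>v' t x\<bar> \<le> K"
  shows "\<forall>\<^sub>F s in at t within {0..}.
           \<bar>((\<integral>x. u s x * v s x \<partial>lebesgue_on \<Omega>) - (\<integral>x. u t x * v t x \<partial>lebesgue_on \<Omega>)) / (s - t)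
             - (\<integral>x. u' t x * v t x + u t x * v' t x \<partial>lebesgue_on \<Omega>)\<bar>
           \<le> \<epsilon> * ((1 + 4 * K + K\<^sup>2) * measure lebesgue \<Omega>)"
proof -
  let ?M = "lebesgue_on \<Omega>"
  interpret finite_measure ?M using finite_measure_lebesgue_on[OF \<Omega>] .
  have Linf: "u s \<in> Linf \<Omega>" "u' s \<in> Linf \<Omega>" "v s \<in> Linf \<Omega>" "v' s \<in> Linf \<Omega>" if "s \<ge> 0" for s
    using u v that by (auto simp: Linf_C1_def)
  have "\<forall>\<^sub>F s in at t within {0..}. s \<ge> 0 \<and> s \<noteq> t \<and> \<bar>s - t\<bar> \<le> \<epsilon>"
    unfolding eventually_at using \<open>0 < \<epsilon>\<close> by (intro exI[of _ \<epsilon>]) (auto simp: dist_real_def)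
  with Linf_C1_difference_quotient[OF u \<open>t \<ge> 0\<close> \<open>\<epsilon> > 0\<close>] Linf_C1_difference_quotient[OF v \<open>t \<ge> 0\<close> \<open>\<epsilon> > 0\<close>]
  show ?thesis
  proof eventually_elim
    case (elim s)
    let ?q = "\<lambda>x. (u s x * v s x - u t x * v t x) / (s - t) - (u' t x * v t x + u t x * v' t x)"
    have "integrable ?M (\<lambda>x. u s x * v s x)" "integrable ?M (\<lambda>x. u t x * v t x)"
      "integrable ?M (\<lambda>x. u' t x * v t x)" "integrable ?M (\<lambda>x. u t x * v' t x)"
      using elim Linf[of s] Linf[OF \<open>t \<ge> 0\<close>] by (auto intro!: integrable_mult_Linf[OF \<Omega>])
    then have q: "((\<integral>x. u s x * v s x \<partial>?M) - (\<integral>x. u t x * v t x \<partial>?M)) / (s - t)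
        - (\<integral>x. u' t x * v t x + u t x * v' t x \<partial>?M) = integral\<^sup>L ?M ?q" "integrable ?M ?q"
      by (simp_all add: integral_diff[symmetric] integral_divide_zero)
    have "AE x in ?M. \<bar>?q x\<bar> \<le> \<epsilon> * (1 + 4 * K + K\<^sup>2)"
      using elim(1,2) K
      by eventually_elim (rule product_difference_quotient_error, use elim(3) \<open>\<epsilon> \<le> 1\<close> in auto)
    then have "\<bar>integral\<^sup>L ?M ?q\<bar> \<le> (\<integral>x. \<epsilon> * (1 + 4 * K + K\<^sup>2) \<partial>?M)"
      using q(2) by (intro integral_abs_bound[THEN order_trans] integral_mono_AE) auto
    then show ?case
      using \<Omega> by (simp add: q(1) measure_restrict_space space_restrict_space fmeasurableD mult_ac)
  qed
qed

lemma has_real_derivative_integral_mult: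
  assumes \<Omega>: "\<Omega> \<in> lmeasurable" and u: "Linf_C1 \<Omega> u u'" and v: "Linf_C1 \<Omega> v v'" and "t \<ge> 0"
  shows "((\<lambda>s. \<integral>x. u s x * v s x \<partial>lebesgue_on \<Omega>) has_real_derivative
            (\<integral>x. u' t x * v t x + u t x * v' t x \<partial>lebesgue_on \<Omega>)) (at t within {0..})"
proof -
  let ?M = "lebesgue_on \<Omega>"
  have "u t \<in> Linf \<Omega>" "u' t \<in> Linf \<Omega>" "v t \<in> Linf \<Omega>" "v' t \<in> Linf \<Omega>"
    using u v \<open>t \<ge> 0\<close> by (auto simp: Linf_C1_def)
  then obtain K1 K2 K3 K4 where K: "K1 \<ge> 0" "K2 \<ge> 0" "K3 \<ge> 0" "K4 \<ge> 0"
    and KAE: "AE x in ?M. \<bar>u t x\<bar> \<le> K1" "AE x in ?M. \<bar>u' t x\<bar> \<le> K2"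
      "AE x in ?M. \<bar>v t x\<bar> \<le> K3" "AE x in ?M. \<bar>v' t x\<bar> \<le> K4"
    by (elim Linf_AE_bounded)
  define K where "K = K1 + K2 + K3 + K4"
  from KAE have K_AE: "AE x in ?M. \<bar>u t x\<bar> \<le> K \<and> \<bar>u' t x\<bar> \<le> K \<and> \<bar>v t x\<bar> \<le> K \<and> \<bar>v' t x\<bar> \<le> K"
    by eventually_elim (use K in \<open>simp add: K_def\<close>)
  have "0 \<le> (1 + 4 * K + K\<^sup>2) * measure lebesgue \<Omega>"
    using K by (simp add: K_def)
  then show ?thesis
    unfolding has_field_derivative_iff
  proof (rule tendsto_linear_error_bound)
    fix \<epsilon> :: real assume "0 < \<epsilon>" "\<epsilon> \<le> 1"
    then show "\<forall>\<^sub>F s in at t within {0..}.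
        \<bar>((\<integral>x. u s x * v s x \<partial>?M) - (\<integral>x. u t x * v t x \<partial>?M)) / (s - t)
          - (\<integral>x. u' t x * v t x + u t x * v' t x \<partial>?M)\<bar>
        \<le> \<epsilon> * ((1 + 4 * K + K\<^sup>2) * measure lebesgue \<Omega>)"
      by (rule integral_mult_difference_quotient_error[OF \<Omega> u v \<open>t \<ge> 0\<close> _ _ K_AE])
  qed
qed

section \<open>Nonlocal operators with symmetric kernels\<close>

lemma integrable_indicator_Times_bounded:
  fixes h :: "'a::euclidean_space \<times> 'a \<Rightarrow> real"
  assumes "\<Omega> \<in> lmeasurable" "h \<in> borel_measurable (lebesgue \<Otimes>\<^sub>M lebesgue)" "\<And>p. \<bar>h p\<bar> \<le> C"
  shows "integrable (lebesgue \<Otimes>\<^sub>M lebesgue) (\<lambda>p. indicator (\<Omega> \<times> \<Omega>) p * h p)"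
proof (rule integrableI_bounded_set[where A="\<Omega> \<times> \<Omega>" and B=C])
  have "emeasure (lebesgue \<Otimes>\<^sub>M lebesgue) (\<Omega> \<times> \<Omega>) = emeasure lebesgue \<Omega> * emeasure lebesgue \<Omega>"
    using assms(1) by (intro sigma_finite_measure.emeasure_pair_measure_Times[OF sigma_finite_lebesgue]) auto
  then show "emeasure (lebesgue \<Otimes>\<^sub>M lebesgue) (\<Omega> \<times> \<Omega>) < \<infinity>"
    using fmeasurableD2[OF assms(1)] by (simp add: ennreal_mult_less_top top.not_eq_extremum)
qed (use assms in \<open>auto simp: indicator_def\<close>)

definition nonlocal_op :: "'a::euclidean_space set \<Rightarrow> ('a \<Rightarrow> 'a \<Rightarrow> real) \<Rightarrow> ('a \<Rightarrow> real) \<Rightarrow> 'a \<Rightarrow> real"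
  where "nonlocal_op \<Omega> k z x = (\<integral>y. k x y * (z y - z x) \<partial>lebesgue_on \<Omega>)"

definition nonlocal_form ::
    "'a::euclidean_space set \<Rightarrow> ('a \<Rightarrow> 'a \<Rightarrow> real) \<Rightarrow> ('a \<Rightarrow> real) \<Rightarrow> ('a \<Rightarrow> real) \<Rightarrow> real"
  where "nonlocal_form \<Omega> k g z = (\<integral>p. indicator (\<Omega> \<times> \<Omega>) p *
            (k (fst p) (snd p) * ((g (fst p) - g (snd p)) * (z (fst p) - z (snd p))))
          \<partial>(lebesgue \<Otimes>\<^sub>M lebesgue))"

locale nonlocal_kernel =
  fixes \<Omega> :: "'a::euclidean_space set" and k :: "'a \<Rightarrow> 'a \<Rightarrow> real"
  assumes domain_lmeasurable: "\<Omega> \<in> lmeasurable"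
    and kernel_measurable: "(\<lambda>p. k (fst p) (snd p)) \<in> borel_measurable (lebesgue \<Otimes>\<^sub>M lebesgue)"
    and kernel_bounded: "\<exists>K. \<forall>x y. \<bar>k x y\<bar> \<le> K"
    and kernel_symmetric: "k x y = k y x"
    and kernel_nonneg: "k x y \<ge> 0"
begin

lemma domain_sets: "\<Omega> \<in> sets lebesgue"
  using domain_lmeasurable by auto

lemma integrable_kernel_times:
  assumes "h \<in> borel_measurable (lebesgue \<Otimes>\<^sub>M lebesgue)" "\<And>p. \<bar>h p\<bar> \<le> C"
  shows "integrable (lebesgue \<Otimes>\<^sub>M lebesgue) (\<lambda>p. indicator (\<Omega> \<times> \<Omega>) p * (k (fst p) (snd p) * h p))"
proof -
  obtain K where K: "\<And>x y. \<bar>k x y\<bar> \<le> K" using kernel_bounded by blast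
  have "\<bar>k (fst p) (snd p) * h p\<bar> \<le> K * C" for p
    unfolding abs_mult using assms(2) by (intro mult_mono K) (auto intro: order_trans[OF abs_ge_zero K])
  moreover have "(\<lambda>p. k (fst p) (snd p) * h p) \<in> borel_measurable (lebesgue \<Otimes>\<^sub>M lebesgue)"
    using kernel_measurable assms(1) by measurable
  ultimately show ?thesis
    by (intro integrable_indicator_Times_bounded[OF domain_lmeasurable])
qed

lemma integrable_form_integrand:
  assumes g: "g \<in> borel_measurable lebesgue" "\<And>x. \<bar>g x\<bar> \<le> Bg"
    and z: "z \<in> borel_measurable lebesgue" "\<And>x. \<bar>z x\<bar> \<le> Bz"
  shows "integrable (lebesgue \<Otimes>\<^sub>M lebesgue) (\<lambda>p. indicator (\<Omega> \<times> \<Omega>) p *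
           (k (fst p) (snd p) * ((g (fst p) - g (snd p)) * (z (fst p) - z (snd p)))))"
proof (rule integrable_kernel_times)
  have "\<bar>g a - g b\<bar> \<le> 2 * Bg" "\<bar>z a - z b\<bar> \<le> 2 * Bz" "0 \<le> Bg" for a b
    using g(2)[of a] g(2)[of b] z(2)[of a] z(2)[of b] by linarith+
  then show "\<bar>(g (fst p) - g (snd p)) * (z (fst p) - z (snd p))\<bar> \<le> 2 * Bg * (2 * Bz)" for p
    unfolding abs_mult by (intro mult_mono) (auto intro: order_trans[OF abs_ge_zero])
qed (use g(1) z(1) in measurable)

lemma integrable_Green_integrand:
  assumes g: "g \<in> borel_measurable lebesgue" "\<And>x. \<bar>g x\<bar> \<le> Bg"
    and z: "z \<in> borel_measurable lebesgue" "\<And>x. \<bar>z x\<bar> \<le> Bz"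
  shows "integrable (lebesgue \<Otimes>\<^sub>M lebesgue)
           (\<lambda>p. indicator (\<Omega> \<times> \<Omega>) p * (k (fst p) (snd p) * (g (fst p) * (z (snd p) - z (fst p)))))"
proof (rule integrable_kernel_times)
  show "\<bar>g (fst p) * (z (snd p) - z (fst p))\<bar> \<le> Bg * (2 * Bz)" for p
    using g(2)[of "fst p"] z(2)[of "fst p"] z(2)[of "snd p"] unfolding abs_mult
    by (intro mult_mono) (auto intro: order_trans[OF abs_ge_zero])
qed (use g(1) z(1) in measurable)

lemma has_bochner_integral_mult_nonlocal_op:
  assumes g: "g \<in> borel_measurable lebesgue" "\<And>x. \<bar>g x\<bar> \<le> Bg"
    and z: "z \<in> borel_measurable lebesgue" "\<And>x. \<bar>z x\<bar> \<le> Bz"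
  shows "has_bochner_integral (lebesgue_on \<Omega>) (\<lambda>x. g x * nonlocal_op \<Omega> k z x)
           (\<integral>p. indicator (\<Omega> \<times> \<Omega>) p * (k (fst p) (snd p) * (g (fst p) * (z (snd p) - z (fst p))))
              \<partial>(lebesgue \<Otimes>\<^sub>M lebesgue))"
proof -
  let ?L = "lebesgue :: 'a measure"
  let ?f = "\<lambda>p. indicator (\<Omega> \<times> \<Omega>) p * (k (fst p) (snd p) * (g (fst p) * (z (snd p) - z (fst p))))"
  have f: "integrable (?L \<Otimes>\<^sub>M ?L) ?f"
    by (rule integrable_Green_integrand[OF g z])
  have inner: "(\<integral>y. ?f (x, y) \<partial>?L) = indicator \<Omega> x * (g x * nonlocal_op \<Omega> k z x)" for x
  proof -
    have "(\<integral>y. ?f (x, y) \<partial>?L) = (\<integral>y. indicator \<Omega> x * g x * (indicator \<Omega> y * (k x y * (z y - z x))) \<partial>?L)"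
      by (intro Bochner_Integration.integral_cong) (auto simp: indicator_times)
    also have "\<dots> = indicator \<Omega> x * g x * (\<integral>y. indicator \<Omega> y * (k x y * (z y - z x)) \<partial>?L)"
      by (rule integral_mult_right_zero)
    finally show ?thesis
      using domain_sets by (simp add: nonlocal_op_def integral_restrict_space)
  qed
  have "has_bochner_integral ?L (\<lambda>x. indicator \<Omega> x * (g x * nonlocal_op \<Omega> k z x))
      (integral\<^sup>L (?L \<Otimes>\<^sub>M ?L) ?f)"
    using lebesgue_pair.integrable_fst'[OF f] lebesgue_pair.integral_fst'[OF f]
    unfolding inner by (simp add: has_bochner_integral_iff)
  then show ?thesis
    using domain_sets by (simp add: has_bochner_integral_restrict_space)
qed

text \<open>Average the double integral with its image under the swap x \<leftrightarrow> y; this uses k x y = k y x.\<close>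

lemma nonlocal_Green_identity:
  assumes g: "g \<in> borel_measurable lebesgue" "\<And>x. \<bar>g x\<bar> \<le> Bg"
    and z: "z \<in> borel_measurable lebesgue" "\<And>x. \<bar>z x\<bar> \<le> Bz"
  shows "has_bochner_integral (lebesgue_on \<Omega>) (\<lambda>x. g x * nonlocal_op \<Omega> k z x) (- nonlocal_form \<Omega> k g z / 2)"
proof -
  let ?L = "lebesgue :: 'a measure"
  let ?f = "\<lambda>p. indicator (\<Omega> \<times> \<Omega>) p * (k (fst p) (snd p) * (g (fst p) * (z (snd p) - z (fst p))))"
  have f: "integrable (?L \<Otimes>\<^sub>M ?L) ?f"
    by (rule integrable_Green_integrand[OF g z])
  have "2 * integral\<^sup>L (?L \<Otimes>\<^sub>M ?L) ?f = integral\<^sup>L (?L \<Otimes>\<^sub>M ?L) ?f + (\<integral>(x, y). ?f (y, x) \<partial>(?L \<Otimes>\<^sub>M ?L))"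
    using lebesgue_pair.integral_product_swap[of ?f] f by (simp add: borel_measurable_integrable)
  also have "\<dots> = (\<integral>p. ?f p + (case p of (x, y) \<Rightarrow> ?f (y, x)) \<partial>(?L \<Otimes>\<^sub>M ?L))"
    using f lebesgue_pair.integrable_product_swap[OF f] by (rule Bochner_Integration.integral_add[symmetric])
  also have "\<dots> = - nonlocal_form \<Omega> k g z"
    unfolding nonlocal_form_def integral_minus[symmetric]
  proof (intro Bochner_Integration.integral_cong refl)
    fix p :: "'a \<times> 'a"
    obtain x y where "p = (x, y)" by fastforce
    then show "?f p + (case p of (x, y) \<Rightarrow> ?f (y, x)) = - (indicator (\<Omega> \<times> \<Omega>) p *
        (k (fst p) (snd p) * ((g (fst p) - g (snd p)) * (z (fst p) - z (snd p)))))"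
      by (simp add: indicator_times kernel_symmetric[of y x] algebra_simps)
  qed
  finally show ?thesis
    using has_bochner_integral_mult_nonlocal_op[OF g z] by (simp add: has_bochner_integral_iff)
qed

lemma nonlocal_form_self_nonneg: "0 \<le> nonlocal_form \<Omega> k g g"
  unfolding nonlocal_form_def using kernel_nonneg
  by (intro Bochner_Integration.integral_nonneg) (simp add: indicator_def)

lemma borel_measurable_nonlocal_op:
  assumes "z \<in> borel_measurable lebesgue"
  shows "nonlocal_op \<Omega> k z \<in> borel_measurable lebesgue"
proof -
  have "(\<lambda>(x, y). indicator \<Omega> y * (k x y * (z y - z x))) \<in> borel_measurable (lebesgue \<Otimes>\<^sub>M lebesgue)"
    using kernel_measurable assms domain_sets unfolding split_beta' by measurable
  from sigma_finite_measure.borel_measurable_lebesgue_integral[OF sigma_finite_lebesgue this]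
  show ?thesis
    using domain_sets by (simp add: nonlocal_op_def[abs_def] integral_restrict_space)
qed

lemma nonlocal_op_cong_AE:
  assumes "z \<in> borel_measurable (lebesgue_on \<Omega>)" "z' \<in> borel_measurable (lebesgue_on \<Omega>)"
    and "AE y in lebesgue_on \<Omega>. z y = z' y" "z x = z' x"
  shows "nonlocal_op \<Omega> k z x = nonlocal_op \<Omega> k z' x"
proof -
  have "(\<lambda>y. k x y) \<in> borel_measurable lebesgue"
    using measurable_Pair2[OF kernel_measurable, of x] by simp
  then have "(\<lambda>y. k x y) \<in> borel_measurable (lebesgue_on \<Omega>)"
    by (rule measurable_restrict_space1)
  then show ?thesis
    unfolding nonlocal_op_def
    by (intro integral_cong_AE) (use assms in \<open>auto elim!: eventually_mono\<close>)
qed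

end

lemma borel_measurable_kernel:
  fixes \<phi> :: "real^'n \<Rightarrow> real"
  assumes "continuous_on UNIV \<phi>"
  shows "(\<lambda>p. kernel \<phi> j (fst p) (snd p)) \<in> borel_measurable (lebesgue \<Otimes>\<^sub>M lebesgue)"
proof -
  have [measurable]: "\<phi> \<in> borel_measurable borel" "(\<lambda>x. x) \<in> borel_measurable (lebesgue :: (real^'n) measure)"
    using assms id_borel_measurable_lebesgue by (auto intro: borel_measurable_continuous_onI simp: id_def)
  show ?thesis unfolding kernel_def by measurable
qed

lemma continuous_bounded_support_bounded:
  fixes \<phi> :: "'a::euclidean_space \<Rightarrow> real"
  assumes "continuous_on UNIV \<phi>" "bounded {x. \<phi> x \<noteq> 0}"
  obtains B where "\<And>x. \<bar>\<phi> x\<bar> \<le> B"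
proof -
  have "compact (\<phi> ` closure {x. \<phi> x \<noteq> 0})"
    using assms by (intro compact_continuous_image continuous_on_subset[OF assms(1)])
      (auto simp: compact_eq_bounded_closed)
  then obtain B where "\<forall>y \<in> \<phi> ` closure {x. \<phi> x \<noteq> 0}. norm y \<le> B"
    using compact_imp_bounded bounded_iff by metis
  then have "\<bar>\<phi> x\<bar> \<le> max 0 B" for x
    using closure_subset[of "{x. \<phi> x \<noteq> 0}"] by (cases "\<phi> x = 0") (auto simp: le_max_iff_disj)
  then show ?thesis using that by blast
qed

lemma nonlocal_kernel_kernel:
  fixes \<phi> :: "real^'n \<Rightarrow> real"
  assumes "\<Omega> \<in> lmeasurable" "continuous_on UNIV \<phi>" "\<And>x. \<bar>\<phi> x\<bar> \<le> B"
    and "\<And>x. \<phi> x \<ge> 0" and "\<And>x. \<phi> (- x) = \<phi> x"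
  shows "nonlocal_kernel \<Omega> (kernel \<phi> j)"
proof
  show "\<exists>K. \<forall>x y. \<bar>kernel \<phi> j x y\<bar> \<le> K"
    using assms(3) by (intro exI[of _ "real j ^ (CARD('n) + 2) * B"] allI)
      (simp add: kernel_def abs_mult mult_left_mono)
  show "kernel \<phi> j x y = kernel \<phi> j y x" for x y
    using assms(5)[of "real j *\<^sub>R (x - y)"] by (simp add: kernel_def algebra_simps)
qed (use assms borel_measurable_kernel in \<open>auto simp: kernel_def\<close>)

lemma smooth_fun_continuous:
  fixes g :: "real^'n \<Rightarrow> real"
  assumes "smooth_fun g"
  shows "continuous_on UNIV g"
proof -
  obtain P :: "'n list \<Rightarrow> real^'n \<Rightarrow> real" where "P [] = g" "\<forall>is. continuous_on UNIV (P is)"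
    using assms unfolding smooth_fun_def by blast
  then show ?thesis by metis
qed

lemma nonlocal_kernel_mollifier:
  fixes \<phi> :: "real^'n \<Rightarrow> real"
  assumes "\<Omega> \<in> lmeasurable" "smooth_fun \<phi>" "\<And>x. \<phi> x \<ge> 0"
    and "closure {x. \<phi> x \<noteq> 0} \<subseteq> ball 0 1"
    and "\<exists>\<psi>::real \<Rightarrow> real. antimono_on {0..} \<psi> \<and> (\<forall>x. \<phi> x = \<psi> (norm x))"
  shows "nonlocal_kernel \<Omega> (kernel \<phi> j)"
proof -
  have cont: "continuous_on UNIV \<phi>"
    using assms(2) by (rule smooth_fun_continuous)
  have "bounded {x. \<phi> x \<noteq> 0}"
    using assms(4) closure_subset bounded_subset[OF bounded_ball] by (metis subset_trans)
  then obtain B where "\<And>x. \<bar>\<phi> x\<bar> \<le> B"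
    using continuous_bounded_support_bounded[OF cont] by blast
  moreover have "\<phi> (- x) = \<phi> x" for x
    using assms(5) by auto
  ultimately show ?thesis
    using nonlocal_kernel_kernel[OF assms(1) cont _ assms(3)] by blast
qed

lemma Gamma_eq_nonlocal_op: "\<Omega> \<in> sets lebesgue \<Longrightarrow> Gamma \<Omega> \<phi> j z = nonlocal_op \<Omega> (kernel \<phi> j) z"
  by (simp add: fun_eq_iff Gamma_def nonlocal_op_def set_lebesgue_integral_def integral_restrict_space)

lemma Gamma_AE_eq_nonlocal_op:
  fixes \<phi> :: "real^'n \<Rightarrow> real"
  assumes "nonlocal_kernel \<Omega> (kernel \<phi> j)" and "a \<in> Linf \<Omega>" and "a0 \<in> borel_measurable lebesgue"
    and ae: "AE x in lebesgue_on \<Omega>. a x = a0 x"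
  shows "AE x in lebesgue_on \<Omega>. Gamma \<Omega> \<phi> j a x = nonlocal_op \<Omega> (kernel \<phi> j) a0 x"
  using ae
proof eventually_elim
  case (elim x)
  interpret nonlocal_kernel \<Omega> "kernel \<phi> j" by fact
  show ?case
    unfolding Gamma_eq_nonlocal_op[OF domain_sets]
    using Linf_measurable[OF assms(2)] measurable_restrict_space1[OF assms(3)] ae elim
    by (rule nonlocal_op_cong_AE)
qed

lemma Yfun_eq_nonlocal_form:
  fixes \<phi> :: "real^'n \<Rightarrow> real"
  assumes "nonlocal_kernel \<Omega> (kernel \<phi> j)"
    and z': "z' \<in> borel_measurable lebesgue" "\<And>x. \<bar>z' x\<bar> \<le> B"
    and ae: "AE x in lebesgue_on \<Omega>. z x = z' x"
  shows "Yfun \<Omega> \<phi> j z = ennreal (nonlocal_form \<Omega> (kernel \<phi> j) z' z')"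
proof -
  interpret nonlocal_kernel \<Omega> "kernel \<phi> j" by fact
  let ?L = "lebesgue :: (real^'n) measure"
  have "AE x in ?L. x \<in> \<Omega> \<longrightarrow> z x = z' x"
    using ae domain_sets by (simp add: AE_restrict_space_iff)
  then obtain N where N_bad: "{x \<in> space ?L. \<not> (x \<in> \<Omega> \<longrightarrow> z x = z' x)} \<subseteq> N"
    and "emeasure ?L N = 0" and [measurable]: "N \<in> sets ?L"
    by (rule AE_E)
  then have N_null: "N \<in> null_sets ?L"
    unfolding null_sets_def by blast
  have eq: "z x = z' x" if "x \<in> \<Omega>" "x \<notin> N" for x
    using N_bad that by auto
  have "AE p in ?L \<Otimes>\<^sub>M ?L. fst p \<notin> N \<and> snd p \<notin> N"
  proof (rule lebesgue_pair.AE_pair_measure)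
    show "{p \<in> space (?L \<Otimes>\<^sub>M ?L). fst p \<notin> N \<and> snd p \<notin> N} \<in> sets (?L \<Otimes>\<^sub>M ?L)"
      by measurable
    show "AE x in ?L. AE y in ?L. fst (x, y) \<notin> N \<and> snd (x, y) \<notin> N"
      using AE_not_in[OF N_null] by eventually_elim (use AE_not_in[OF N_null] in auto)
  qed
  then have "Yfun \<Omega> \<phi> j z = (\<integral>\<^sup>+p. ennreal (indicator (\<Omega> \<times> \<Omega>) p * (kernel \<phi> j (fst p) (snd p) *
      ((z' (fst p) - z' (snd p)) * (z' (fst p) - z' (snd p))))) \<partial>(?L \<Otimes>\<^sub>M ?L))"
    unfolding Yfun_def
    by (intro nn_integral_cong_AE, eventually_elim)
      (auto simp: indicator_def power2_eq_square eq)
  also have "\<dots> = ennreal (nonlocal_form \<Omega> (kernel \<phi> j) z' z')"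
    unfolding nonlocal_form_def
    by (intro nn_integral_eq_integral integrable_form_integrand[OF z' z'] AE_I2)
      (simp add: kernel_nonneg indicator_def)
  finally show ?thesis .
qed

section \<open>The energy of the nonlocal Gray--Scott system\<close>

definition energy :: "'a::euclidean_space set \<Rightarrow> real \<Rightarrow> ('a \<Rightarrow> real) \<Rightarrow> ('a \<Rightarrow> real) \<Rightarrow> real"
  where "energy \<Omega> \<alpha> a b = (\<integral>x. \<alpha> * (a x)\<^sup>2 + (a x + b x)\<^sup>2 \<partial>lebesgue_on \<Omega>)"

definition energy_rate ::
    "'a::euclidean_space set \<Rightarrow> real \<Rightarrow> ('a \<Rightarrow> real) \<Rightarrow> ('a \<Rightarrow> real) \<Rightarrow> ('a \<Rightarrow> real) \<Rightarrow> ('a \<Rightarrow> real) \<Rightarrow> real"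
  where "energy_rate \<Omega> \<alpha> a b a' b' =
           (\<integral>x. 2 * \<alpha> * a x * a' x + 2 * (a x + b x) * (a' x + b' x) \<partial>lebesgue_on \<Omega>)"

lemma energy_eq_products:
  assumes "\<Omega> \<in> lmeasurable" "a \<in> Linf \<Omega>" "b \<in> Linf \<Omega>"
  shows "energy \<Omega> \<alpha> a b = (\<alpha> + 1) * (\<integral>x. a x * a x \<partial>lebesgue_on \<Omega>)
           + 2 * (\<integral>x. a x * b x \<partial>lebesgue_on \<Omega>) + (\<integral>x. b x * b x \<partial>lebesgue_on \<Omega>)"
proof -
  have "has_bochner_integral (lebesgue_on \<Omega>) (\<lambda>x. (\<alpha> + 1) * (a x * a x) + 2 * (a x * b x) + b x * b x)
      ((\<alpha> + 1) * (\<integral>x. a x * a x \<partial>lebesgue_on \<Omega>) + 2 * (\<integral>x. a x * b x \<partial>lebesgue_on \<Omega>)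
        + (\<integral>x. b x * b x \<partial>lebesgue_on \<Omega>))"
    using assms by (intro has_bochner_integral_add has_bochner_integral_mult_right
        has_bochner_integral_integrable integrable_mult_Linf)
  then show ?thesis
    unfolding energy_def
    by (auto dest!: has_bochner_integral_integral_eq simp: power2_eq_square algebra_simps)
qed

lemma energy_rate_eq_products:
  assumes "\<Omega> \<in> lmeasurable" "a \<in> Linf \<Omega>" "b \<in> Linf \<Omega>" "a' \<in> Linf \<Omega>" "b' \<in> Linf \<Omega>"
  shows "energy_rate \<Omega> \<alpha> a b a' b' =
           (\<alpha> + 1) * (\<integral>x. a' x * a x + a x * a' x \<partial>lebesgue_on \<Omega>)
           + 2 * (\<integral>x. a' x * b x + a x * b' x \<partial>lebesgue_on \<Omega>)
           + (\<integral>x. b' x * b x + b x * b' x \<partial>lebesgue_on \<Omega>)"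
proof -
  have "has_bochner_integral (lebesgue_on \<Omega>)
      (\<lambda>x. (\<alpha> + 1) * (a' x * a x + a x * a' x) + 2 * (a' x * b x + a x * b' x) + (b' x * b x + b x * b' x))
      ((\<alpha> + 1) * (\<integral>x. a' x * a x + a x * a' x \<partial>lebesgue_on \<Omega>)
        + 2 * (\<integral>x. a' x * b x + a x * b' x \<partial>lebesgue_on \<Omega>)
        + (\<integral>x. b' x * b x + b x * b' x \<partial>lebesgue_on \<Omega>))"
    using assms by (intro has_bochner_integral_add has_bochner_integral_mult_right
        has_bochner_integral_integrable Bochner_Integration.integrable_add integrable_mult_Linf)
  then show ?thesis
    unfolding energy_rate_def
    by (auto dest!: has_bochner_integral_integral_eq simp: algebra_simps)
qed

lemma has_real_derivative_energy:
  assumes \<Omega>: "\<Omega> \<in> lmeasurable" and u: "Linf_C1 \<Omega> u u'" and v: "Linf_C1 \<Omega> v v'" and "s \<ge> 0"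
  shows "((\<lambda>t. energy \<Omega> \<alpha> (u t) (v t)) has_real_derivative
           energy_rate \<Omega> \<alpha> (u s) (v s) (u' s) (v' s)) (at s within {0..})"
proof -
  have Linf: "u t \<in> Linf \<Omega>" "u' t \<in> Linf \<Omega>" "v t \<in> Linf \<Omega>" "v' t \<in> Linf \<Omega>" if "t \<ge> 0" for t
    using u v that by (auto simp: Linf_C1_def)
  have "((\<lambda>t. (\<alpha> + 1) * (\<integral>x. u t x * u t x \<partial>lebesgue_on \<Omega>) + 2 * (\<integral>x. u t x * v t x \<partial>lebesgue_on \<Omega>)
      + (\<integral>x. v t x * v t x \<partial>lebesgue_on \<Omega>)) has_real_derivative
      energy_rate \<Omega> \<alpha> (u s) (v s) (u' s) (v' s)) (at s within {0..})"
    unfolding energy_rate_eq_products[OF \<Omega> Linf(1,3,2,4)[OF \<open>s \<ge> 0\<close>]]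
    by (intro DERIV_add DERIV_cmult has_real_derivative_integral_mult \<Omega> u v \<open>s \<ge> 0\<close>)
  then show ?thesis
    by (rule has_field_derivative_transform_within[OF _ zero_less_one])
      (use \<open>s \<ge> 0\<close> in \<open>auto simp: energy_eq_products[OF \<Omega> Linf(1,3)]\<close>)
qed

lemma gray_scott_weight_ge_4:
  fixes d1 d2 :: real
  assumes "d1 > 0" "d2 > 0"
  shows "4 \<le> (d1 + d2)\<^sup>2 / (d1 * d2)"
proof -
  have "(d1 + d2)\<^sup>2 = 4 * (d1 * d2) + (d1 - d2)\<^sup>2"
    by (simp add: power2_eq_square algebra_simps)
  then show ?thesis
    using assms by (simp add: pos_le_divide_eq)
qed

text \<open>The weight \<alpha> = (d1 + d2)^2 / (d1 d2) makes the cross term (d1 + d2) x y between the two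
  diffusions absorbable: \<alpha> d1 \<cdot> d2 / 2 \<ge> ((d1 + d2) / 2)^2.\<close>

lemma diffusion_quadratic_form_nonneg:
  fixes d1 d2 x y :: real
  assumes "d1 > 0" "d2 > 0"
  shows "0 \<le> (((d1 + d2)\<^sup>2 / (d1 * d2) + 1) * d1 - min d1 (d2 / 2)) * x\<^sup>2 + (d1 + d2) * (x * y)
              + (d2 - min d1 (d2 / 2)) * y\<^sup>2"
proof -
  define \<alpha> where "\<alpha> = (d1 + d2)\<^sup>2 / (d1 * d2)"
  have "d2 * (\<alpha> * d1 * x\<^sup>2 + (d1 + d2) * (x * y) + d2 / 2 * y\<^sup>2) = ((d1 + d2) * x + d2 / 2 * y)\<^sup>2 + (d2 / 2 * y)\<^sup>2"
    unfolding \<alpha>_def using assms by (simp add: field_simps power2_eq_square)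
  then have "0 \<le> \<alpha> * d1 * x\<^sup>2 + (d1 + d2) * (x * y) + d2 / 2 * y\<^sup>2"
    using assms(2) by (metis sum_power2_ge_zero zero_le_mult_iff linorder_not_less)
  moreover have "\<alpha> * d1 * x\<^sup>2 \<le> ((\<alpha> + 1) * d1 - min d1 (d2 / 2)) * x\<^sup>2"
    by (rule mult_right_mono) (simp_all add: algebra_simps)
  moreover have "d2 / 2 * y\<^sup>2 \<le> (d2 - min d1 (d2 / 2)) * y\<^sup>2"
    by (rule mult_right_mono) simp_all
  ultimately show ?thesis unfolding \<alpha>_def by linarith
qed

lemma (in nonlocal_kernel) has_bochner_integral_energy_rate_diffusion:
  assumes a: "a \<in> borel_measurable lebesgue" "\<And>x. \<bar>a x\<bar> \<le> B"
    and b: "b \<in> borel_measurable lebesgue" "\<And>x. \<bar>b x\<bar> \<le> B"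
  shows "has_bochner_integral (lebesgue_on \<Omega>)
      (\<lambda>x. 2 * \<alpha> * a x * (d1 * nonlocal_op \<Omega> k a x)
         + 2 * (a x + b x) * (d1 * nonlocal_op \<Omega> k a x + d2 * nonlocal_op \<Omega> k b x))
      (- ((\<alpha> + 1) * d1 * nonlocal_form \<Omega> k a a + d1 * nonlocal_form \<Omega> k b a
          + d2 * nonlocal_form \<Omega> k a b + d2 * nonlocal_form \<Omega> k b b))"
proof -
  let ?\<Gamma> = "nonlocal_op \<Omega> k" and ?F = "nonlocal_form \<Omega> k"
  have "has_bochner_integral (lebesgue_on \<Omega>)
      (\<lambda>x. (2 * \<alpha> + 2) * d1 * (a x * ?\<Gamma> a x) + 2 * d1 * (b x * ?\<Gamma> a x)
         + 2 * d2 * (a x * ?\<Gamma> b x) + 2 * d2 * (b x * ?\<Gamma> b x))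
      ((2 * \<alpha> + 2) * d1 * (- ?F a a / 2) + 2 * d1 * (- ?F b a / 2)
         + 2 * d2 * (- ?F a b / 2) + 2 * d2 * (- ?F b b / 2))"
    by (intro has_bochner_integral_add has_bochner_integral_mult_right nonlocal_Green_identity[OF a a]
        nonlocal_Green_identity[OF a b] nonlocal_Green_identity[OF b a] nonlocal_Green_identity[OF b b])
  then show ?thesis
    by (rule has_bochner_integral_cong[THEN iffD1, rotated -1]) (simp_all add: algebra_simps)
qed

lemma (in nonlocal_kernel) energy_rate_diffusion_le:
  fixes d1 d2 :: real
  assumes "d1 > 0" "d2 > 0"
    and a: "a \<in> borel_measurable lebesgue" "\<And>x. \<bar>a x\<bar> \<le> B"
    and b: "b \<in> borel_measurable lebesgue" "\<And>x. \<bar>b x\<bar> \<le> B"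
  defines "\<alpha> \<equiv> (d1 + d2)\<^sup>2 / (d1 * d2)"
  shows "energy_rate \<Omega> \<alpha> a b (\<lambda>x. d1 * nonlocal_op \<Omega> k a x) (\<lambda>x. d2 * nonlocal_op \<Omega> k b x)
           \<le> - min d1 (d2 / 2) * (nonlocal_form \<Omega> k a a + nonlocal_form \<Omega> k b b)"
proof -
  let ?F = "nonlocal_form \<Omega> k"
  define c where "c = min d1 (d2 / 2)"
  have rate: "energy_rate \<Omega> \<alpha> a b (\<lambda>x. d1 * nonlocal_op \<Omega> k a x) (\<lambda>x. d2 * nonlocal_op \<Omega> k b x)
      = - ((\<alpha> + 1) * d1 * ?F a a + d1 * ?F b a + d2 * ?F a b + d2 * ?F b b)"
    unfolding energy_rate_def
    by (rule has_bochner_integral_integral_eq[OF has_bochner_integral_energy_rate_diffusion[OF a b]])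
  define q where "q g z p = indicator (\<Omega> \<times> \<Omega>) p *
      (k (fst p) (snd p) * ((g (fst p) - g (snd p)) * (z (fst p) - z (snd p))))" for g z :: "'a \<Rightarrow> real" and p
  have hq: "has_bochner_integral (lebesgue \<Otimes>\<^sub>M lebesgue)
      (\<lambda>p. ((\<alpha> + 1) * d1 - c) * q a a p + d1 * q b a p + d2 * q a b p + (d2 - c) * q b b p)
      (((\<alpha> + 1) * d1 - c) * ?F a a + d1 * ?F b a + d2 * ?F a b + (d2 - c) * ?F b b)"
    unfolding nonlocal_form_def q_def
    by (intro has_bochner_integral_add has_bochner_integral_mult_right
        has_bochner_integral_integrable integrable_form_integrand[OF a a] integrable_form_integrand[OF a b]
        integrable_form_integrand[OF b a] integrable_form_integrand[OF b b])
  have q_nonneg: "0 \<le> ((\<alpha> + 1) * d1 - c) * q a a p + d1 * q b a p + d2 * q a b p + (d2 - c) * q b b p" for p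
  proof -
    define x where "x = a (fst p) - a (snd p)"
    define y where "y = b (fst p) - b (snd p)"
    have "((\<alpha> + 1) * d1 - c) * q a a p + d1 * q b a p + d2 * q a b p + (d2 - c) * q b b p
        = indicator (\<Omega> \<times> \<Omega>) p * k (fst p) (snd p) *
          (((\<alpha> + 1) * d1 - c) * x\<^sup>2 + (d1 + d2) * (x * y) + (d2 - c) * y\<^sup>2)"
      unfolding q_def x_def[symmetric] y_def[symmetric] by (simp add: algebra_simps power2_eq_square)
    moreover have "0 \<le> ((\<alpha> + 1) * d1 - c) * x\<^sup>2 + (d1 + d2) * (x * y) + (d2 - c) * y\<^sup>2"
      unfolding \<alpha>_def c_def using assms(1,2) by (rule diffusion_quadratic_form_nonneg)
    ultimately show ?thesis
      using kernel_nonneg by simp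
  qed
  have "0 \<le> (\<integral>p. ((\<alpha> + 1) * d1 - c) * q a a p + d1 * q b a p + d2 * q a b p + (d2 - c) * q b b p
      \<partial>(lebesgue \<Otimes>\<^sub>M lebesgue))"
    by (intro Bochner_Integration.integral_nonneg q_nonneg)
  then have "0 \<le> ((\<alpha> + 1) * d1 - c) * ?F a a + d1 * ?F b a + d2 * ?F a b + (d2 - c) * ?F b b"
    unfolding has_bochner_integral_integral_eq[OF hq] .
  then show ?thesis
    unfolding rate c_def[symmetric] by (simp add: algebra_simps)
qed

text \<open>The cubic terms a b^2 cancel in the equation for a + b; only the one from the weighted
  equation for a survives, and it yields the bound on \<parallel>u v\<parallel>^2.\<close>

lemma gray_scott_reaction_bound:
  fixes a b \<alpha> f \<kappa> :: real
  assumes "\<alpha> \<ge> 0" "f > 0" "\<kappa> > 0" "a \<ge> 0" "b \<ge> 0"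
  shows "2 * \<alpha> * a * (- a * b\<^sup>2 + f * (1 - a)) + 2 * (a + b) * (- a * b\<^sup>2 + f * (1 - a) + (a * b\<^sup>2 - (f + \<kappa>) * b))
     \<le> - 2 * \<alpha> * (a * b)\<^sup>2 - f * (\<alpha> * a\<^sup>2 + (a + b)\<^sup>2) + (\<alpha> + 1) * f"
proof -
  have "- 2 * \<alpha> * (a * b)\<^sup>2 - f * (\<alpha> * a\<^sup>2 + (a + b)\<^sup>2) + (\<alpha> + 1) * f
      - (2 * \<alpha> * a * (- a * b\<^sup>2 + f * (1 - a)) + 2 * (a + b) * (- a * b\<^sup>2 + f * (1 - a) + (a * b\<^sup>2 - (f + \<kappa>) * b)))
      = \<alpha> * f * (1 - a)\<^sup>2 + f * (1 - (a + b))\<^sup>2 + 2 * \<kappa> * (a + b) * b"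
    by (simp add: algebra_simps power2_eq_square)
  moreover have "0 \<le> \<alpha> * f * (1 - a)\<^sup>2 + f * (1 - (a + b))\<^sup>2 + 2 * \<kappa> * (a + b) * b"
    using assms by (intro add_nonneg_nonneg mult_nonneg_nonneg) auto
  ultimately show ?thesis by linarith
qed

lemma energy_rate_add:
  assumes "integrable (lebesgue_on \<Omega>) (\<lambda>x. 2 * \<alpha> * a x * a1 x + 2 * (a x + b x) * (a1 x + b1 x))"
    and "integrable (lebesgue_on \<Omega>) (\<lambda>x. 2 * \<alpha> * a x * a2 x + 2 * (a x + b x) * (a2 x + b2 x))"
  shows "energy_rate \<Omega> \<alpha> a b (\<lambda>x. a1 x + a2 x) (\<lambda>x. b1 x + b2 x)
           = energy_rate \<Omega> \<alpha> a b a1 b1 + energy_rate \<Omega> \<alpha> a b a2 b2"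
  unfolding energy_rate_def Bochner_Integration.integral_add[OF assms, symmetric]
  by (simp add: algebra_simps)

lemma energy_rate_reaction_le:
  fixes a b :: "'a::euclidean_space \<Rightarrow> real"
  assumes \<Omega>: "\<Omega> \<in> lmeasurable" and "\<alpha> \<ge> 0" "f > 0" "\<kappa> > 0"
    and a: "a \<in> borel_measurable lebesgue" "\<And>x. \<bar>a x\<bar> \<le> B"
    and b: "b \<in> borel_measurable lebesgue" "\<And>x. \<bar>b x\<bar> \<le> B"
    and nonneg: "AE x in lebesgue_on \<Omega>. a x \<ge> 0 \<and> b x \<ge> 0"
  shows "energy_rate \<Omega> \<alpha> a b (\<lambda>x. - a x * (b x)\<^sup>2 + f * (1 - a x)) (\<lambda>x. a x * (b x)\<^sup>2 - (f + \<kappa>) * b x)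
           \<le> - 2 * \<alpha> * (\<integral>x. (a x * b x)\<^sup>2 \<partial>lebesgue_on \<Omega>) - f * energy \<Omega> \<alpha> a b
              + (\<alpha> + 1) * f * measure lebesgue \<Omega>"
proof -
  let ?M = "lebesgue_on \<Omega>"
  interpret finite_measure ?M
    using finite_measure_lebesgue_on[OF \<Omega>] .
  have int: "integrable ?M (\<lambda>x. \<rho> (a x) (b x))"
    if "continuous_on UNIV (\<lambda>p. \<rho> (fst p) (snd p))" for \<rho> :: "real \<Rightarrow> real \<Rightarrow> real"
    by (rule integrable_continuous_comp_bounded[OF \<Omega> that a b])
  have int_rate: "integrable ?M (\<lambda>x. 2 * \<alpha> * a x * (- a x * (b x)\<^sup>2 + f * (1 - a x))
      + 2 * (a x + b x) * (- a x * (b x)\<^sup>2 + f * (1 - a x) + (a x * (b x)\<^sup>2 - (f + \<kappa>) * b x)))"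
    by (rule int[of "\<lambda>p q. 2 * \<alpha> * p * (- p * q\<^sup>2 + f * (1 - p))
      + 2 * (p + q) * (- p * q\<^sup>2 + f * (1 - p) + (p * q\<^sup>2 - (f + \<kappa>) * q))"]) (intro continuous_intros)
  have int_prod: "integrable ?M (\<lambda>x. (a x * b x)\<^sup>2)"
    by (rule int[of "\<lambda>p q. (p * q)\<^sup>2"]) (intro continuous_intros)
  have int_energy: "integrable ?M (\<lambda>x. \<alpha> * (a x)\<^sup>2 + (a x + b x)\<^sup>2)"
    by (rule int[of "\<lambda>p q. \<alpha> * p\<^sup>2 + (p + q)\<^sup>2"]) (intro continuous_intros)
  have "energy_rate \<Omega> \<alpha> a b (\<lambda>x. - a x * (b x)\<^sup>2 + f * (1 - a x)) (\<lambda>x. a x * (b x)\<^sup>2 - (f + \<kappa>) * b x)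
      \<le> (\<integral>x. - 2 * \<alpha> * (a x * b x)\<^sup>2 - f * (\<alpha> * (a x)\<^sup>2 + (a x + b x)\<^sup>2) + (\<alpha> + 1) * f \<partial>?M)"
    unfolding energy_rate_def
  proof (rule integral_mono_AE[OF int_rate])
    show "AE x in ?M. 2 * \<alpha> * a x * (- a x * (b x)\<^sup>2 + f * (1 - a x))
          + 2 * (a x + b x) * (- a x * (b x)\<^sup>2 + f * (1 - a x) + (a x * (b x)\<^sup>2 - (f + \<kappa>) * b x))
        \<le> - 2 * \<alpha> * (a x * b x)\<^sup>2 - f * (\<alpha> * (a x)\<^sup>2 + (a x + b x)\<^sup>2) + (\<alpha> + 1) * f"
      using nonneg
      by eventually_elim (rule gray_scott_reaction_bound, use assms(2-4) in auto)
  qed (use int_prod int_energy in auto)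
  also have "\<dots> = - 2 * \<alpha> * (\<integral>x. (a x * b x)\<^sup>2 \<partial>?M) - f * energy \<Omega> \<alpha> a b
      + (\<alpha> + 1) * f * measure lebesgue \<Omega>"
    using int_prod int_energy \<Omega>
    by (simp add: energy_def measure_restrict_space space_restrict_space fmeasurableD)
  finally show ?thesis .
qed

lemma energy_cong_AE:
  assumes "a \<in> borel_measurable (lebesgue_on \<Omega>)" "b \<in> borel_measurable (lebesgue_on \<Omega>)"
    and "a' \<in> borel_measurable (lebesgue_on \<Omega>)" "b' \<in> borel_measurable (lebesgue_on \<Omega>)"
    and "AE x in lebesgue_on \<Omega>. a x = a' x \<and> b x = b' x"
  shows "energy \<Omega> \<alpha> a b = energy \<Omega> \<alpha> a' b'"
  unfolding energy_def
proof (rule integral_cong_AE)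
  show "AE x in lebesgue_on \<Omega>. \<alpha> * (a x)\<^sup>2 + (a x + b x)\<^sup>2 = \<alpha> * (a' x)\<^sup>2 + (a' x + b' x)\<^sup>2"
    using assms(5) by eventually_elim simp
qed (use assms(1-4) in measurable)

lemma energy_rate_cong_AE:
  assumes "a \<in> borel_measurable (lebesgue_on \<Omega>)" "b \<in> borel_measurable (lebesgue_on \<Omega>)"
    and "a' \<in> borel_measurable (lebesgue_on \<Omega>)" "b' \<in> borel_measurable (lebesgue_on \<Omega>)"
    and "c \<in> borel_measurable (lebesgue_on \<Omega>)" "d \<in> borel_measurable (lebesgue_on \<Omega>)"
    and "c' \<in> borel_measurable (lebesgue_on \<Omega>)" "d' \<in> borel_measurable (lebesgue_on \<Omega>)"
    and "AE x in lebesgue_on \<Omega>. a x = c x \<and> b x = d x \<and> a' x = c' x \<and> b' x = d' x"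
  shows "energy_rate \<Omega> \<alpha> a b a' b' = energy_rate \<Omega> \<alpha> c d c' d'"
  unfolding energy_rate_def
proof (rule integral_cong_AE)
  show "AE x in lebesgue_on \<Omega>. 2 * \<alpha> * a x * a' x + 2 * (a x + b x) * (a' x + b' x)
      = 2 * \<alpha> * c x * c' x + 2 * (c x + d x) * (c' x + d' x)"
    using assms(9) by eventually_elim simp
qed (use assms(1-8) in measurable)

text \<open>The three quantities are finite for Linf arguments (\<open>Yfun_L2sq_eq_dissipation\<close>), so taking
  \<open>enn2real\<close> loses nothing.\<close>

definition dissipation ::
    "(real^'n) set \<Rightarrow> (real^'n \<Rightarrow> real) \<Rightarrow> nat \<Rightarrow> (real^'n \<Rightarrow> real) \<Rightarrow> (real^'n \<Rightarrow> real) \<Rightarrow> real"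
  where "dissipation \<Omega> \<phi> j a b =
           enn2real (Yfun \<Omega> \<phi> j a) + enn2real (Yfun \<Omega> \<phi> j b) + enn2real (L2sq \<Omega> (\<lambda>x. a x * b x))"

lemma dissipation_eq_nonlocal_form:
  fixes \<phi> :: "real^'n \<Rightarrow> real"
  assumes "nonlocal_kernel \<Omega> (kernel \<phi> j)"
    and "a \<in> borel_measurable (lebesgue_on \<Omega>)" "b \<in> borel_measurable (lebesgue_on \<Omega>)"
    and a': "a' \<in> borel_measurable lebesgue" "\<And>x. \<bar>a' x\<bar> \<le> B"
    and b': "b' \<in> borel_measurable lebesgue" "\<And>x. \<bar>b' x\<bar> \<le> B"
    and ae: "AE x in lebesgue_on \<Omega>. a x = a' x \<and> b x = b' x"
  shows "Yfun \<Omega> \<phi> j a + Yfun \<Omega> \<phi> j b + L2sq \<Omega> (\<lambda>x. a x * b x) = ennreal (dissipation \<Omega> \<phi> j a b)"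
    and "dissipation \<Omega> \<phi> j a b = nonlocal_form \<Omega> (kernel \<phi> j) a' a' + nonlocal_form \<Omega> (kernel \<phi> j) b' b'
           + (\<integral>x. (a' x * b' x)\<^sup>2 \<partial>lebesgue_on \<Omega>)"
proof -
  interpret nonlocal_kernel \<Omega> "kernel \<phi> j" by fact
  let ?M = "lebesgue_on \<Omega>" and ?F = "nonlocal_form \<Omega> (kernel \<phi> j)"
  have [measurable]: "a \<in> borel_measurable ?M" "b \<in> borel_measurable ?M"
    "a' \<in> borel_measurable ?M" "b' \<in> borel_measurable ?M"
    using assms(2,3) measurable_restrict_space1[OF a'(1)] measurable_restrict_space1[OF b'(1)] by auto
  have Y: "Yfun \<Omega> \<phi> j a = ennreal (?F a' a')" "Yfun \<Omega> \<phi> j b = ennreal (?F b' b')"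
    by (rule Yfun_eq_nonlocal_form[OF assms(1) a'] Yfun_eq_nonlocal_form[OF assms(1) b'],
        rule eventually_mono[OF ae], simp)+
  have "integrable ?M (\<lambda>x. (a' x * b' x)\<^sup>2)"
    by (rule integrable_continuous_comp_bounded[OF domain_lmeasurable _ a' b', of "\<lambda>p q. (p * q)\<^sup>2"])
      (intro continuous_intros)
  moreover have "AE x in ?M. (a x * b x)\<^sup>2 = (a' x * b' x)\<^sup>2"
    using ae by eventually_elim simp
  moreover have m: "(\<lambda>x. (a x * b x)\<^sup>2) \<in> borel_measurable ?M" "(\<lambda>x. (a' x * b' x)\<^sup>2) \<in> borel_measurable ?M"
    by measurable measurable
  ultimately have "integrable ?M (\<lambda>x. (a x * b x)\<^sup>2)"
    and "(\<integral>x. (a x * b x)\<^sup>2 \<partial>?M) = (\<integral>x. (a' x * b' x)\<^sup>2 \<partial>?M)"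
    using integrable_cong_AE[OF m] integral_cong_AE[OF m] by simp_all
  then have L2: "L2sq \<Omega> (\<lambda>x. a x * b x) = ennreal (\<integral>x. (a' x * b' x)\<^sup>2 \<partial>?M)"
    using L2sq_eq_integral[OF domain_sets] by (simp add: power_mult_distrib)
  have nonneg: "0 \<le> ?F a' a'" "0 \<le> ?F b' b'" "0 \<le> (\<integral>x. (a' x * b' x)\<^sup>2 \<partial>?M)"
    by (simp_all add: nonlocal_form_self_nonneg)
  then show "dissipation \<Omega> \<phi> j a b = ?F a' a' + ?F b' b' + (\<integral>x. (a' x * b' x)\<^sup>2 \<partial>?M)"
    unfolding dissipation_def Y L2 by simp
  then show "Yfun \<Omega> \<phi> j a + Yfun \<Omega> \<phi> j b + L2sq \<Omega> (\<lambda>x. a x * b x) = ennreal (dissipation \<Omega> \<phi> j a b)"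
    unfolding Y L2 using nonneg by (simp add: ennreal_plus)
qed

lemma (in nonlocal_kernel) energy_rate_gray_scott_le:
  fixes d1 d2 f \<kappa> :: real
  assumes pos: "d1 > 0" "d2 > 0" "f > 0" "\<kappa> > 0"
    and a: "a \<in> borel_measurable lebesgue" "\<And>x. \<bar>a x\<bar> \<le> B"
    and b: "b \<in> borel_measurable lebesgue" "\<And>x. \<bar>b x\<bar> \<le> B"
    and nonneg: "AE x in lebesgue_on \<Omega>. a x \<ge> 0 \<and> b x \<ge> 0"
  defines "\<alpha> \<equiv> (d1 + d2)\<^sup>2 / (d1 * d2)"
  shows "energy_rate \<Omega> \<alpha> a b (\<lambda>x. d1 * nonlocal_op \<Omega> k a x + (- a x * (b x)\<^sup>2 + f * (1 - a x)))
             (\<lambda>x. d2 * nonlocal_op \<Omega> k b x + (a x * (b x)\<^sup>2 - (f + \<kappa>) * b x))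
         \<le> - min (min d1 (d2 / 2)) (2 * \<alpha>) *
             (nonlocal_form \<Omega> k a a + nonlocal_form \<Omega> k b b + (\<integral>x. (a x * b x)\<^sup>2 \<partial>lebesgue_on \<Omega>))
           - f * energy \<Omega> \<alpha> a b + (\<alpha> + 1) * f * measure lebesgue \<Omega>"
proof -
  let ?\<Gamma> = "nonlocal_op \<Omega> k" and ?F = "nonlocal_form \<Omega> k"
  let ?ra = "\<lambda>x. - a x * (b x)\<^sup>2 + f * (1 - a x)" and ?rb = "\<lambda>x. a x * (b x)\<^sup>2 - (f + \<kappa>) * b x"
  define c where "c = min d1 (d2 / 2)"
  define X where "X = (\<integral>x. (a x * b x)\<^sup>2 \<partial>lebesgue_on \<Omega>)"
  have "\<alpha> \<ge> 0" using pos by (simp add: \<alpha>_def)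
  have "energy_rate \<Omega> \<alpha> a b (\<lambda>x. d1 * ?\<Gamma> a x + ?ra x) (\<lambda>x. d2 * ?\<Gamma> b x + ?rb x)
      = energy_rate \<Omega> \<alpha> a b (\<lambda>x. d1 * ?\<Gamma> a x) (\<lambda>x. d2 * ?\<Gamma> b x) + energy_rate \<Omega> \<alpha> a b ?ra ?rb"
  proof (rule energy_rate_add)
    show "integrable (lebesgue_on \<Omega>)
        (\<lambda>x. 2 * \<alpha> * a x * (d1 * ?\<Gamma> a x) + 2 * (a x + b x) * (d1 * ?\<Gamma> a x + d2 * ?\<Gamma> b x))"
      using has_bochner_integral_energy_rate_diffusion[OF a b] by (rule integrable.intros)
    show "integrable (lebesgue_on \<Omega>) (\<lambda>x. 2 * \<alpha> * a x * ?ra x + 2 * (a x + b x) * (?ra x + ?rb x))"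
      by (rule integrable_continuous_comp_bounded[OF domain_lmeasurable _ a b,
            of "\<lambda>p q. 2 * \<alpha> * p * (- p * q\<^sup>2 + f * (1 - p))
              + 2 * (p + q) * (- p * q\<^sup>2 + f * (1 - p) + (p * q\<^sup>2 - (f + \<kappa>) * q))"])
        (intro continuous_intros)
  qed
  also have "\<dots> \<le> - c * (?F a a + ?F b b) + (- 2 * \<alpha> * X - f * energy \<Omega> \<alpha> a b + (\<alpha> + 1) * f * measure lebesgue \<Omega>)"
    unfolding c_def X_def
    using energy_rate_diffusion_le[OF pos(1,2) a b, folded \<alpha>_def]
      energy_rate_reaction_le[OF domain_lmeasurable \<open>\<alpha> \<ge> 0\<close> pos(3,4) a b nonneg]
    by (rule add_mono)
  also have "\<dots> \<le> - min c (2 * \<alpha>) * (?F a a + ?F b b + X) - f * energy \<Omega> \<alpha> a b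
      + (\<alpha> + 1) * f * measure lebesgue \<Omega>"
  proof -
    have "0 \<le> ?F a a + ?F b b" "0 \<le> X"
      by (simp_all add: nonlocal_form_self_nonneg X_def)
    then have "min c (2 * \<alpha>) * (?F a a + ?F b b) \<le> c * (?F a a + ?F b b)" "min c (2 * \<alpha>) * X \<le> 2 * \<alpha> * X"
      by (simp_all add: mult_right_mono)
    then show ?thesis by (simp add: algebra_simps)
  qed
  finally show ?thesis
    by (simp add: c_def X_def)
qed

lemma energy_rate_le_dissipation:
  fixes \<phi> :: "real^'n \<Rightarrow> real"
  assumes K: "nonlocal_kernel \<Omega> (kernel \<phi> j)"
    and pos: "d1 > 0" "d2 > 0" "f > 0" "\<kappa> > 0"
    and a: "a \<in> Linf \<Omega>" and b: "b \<in> Linf \<Omega>"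
    and a': "a' \<in> borel_measurable (lebesgue_on \<Omega>)" and b': "b' \<in> borel_measurable (lebesgue_on \<Omega>)"
    and nonneg: "AE x\<in>\<Omega> in lebesgue. a x \<ge> 0 \<and> b x \<ge> 0"
    and eq_a: "AE x\<in>\<Omega> in lebesgue. a' x = d1 * Gamma \<Omega> \<phi> j a x - a x * (b x)\<^sup>2 + f * (1 - a x)"
    and eq_b: "AE x\<in>\<Omega> in lebesgue. b' x = d2 * Gamma \<Omega> \<phi> j b x + a x * (b x)\<^sup>2 - (f + \<kappa>) * b x"
  defines "\<alpha> \<equiv> (d1 + d2)\<^sup>2 / (d1 * d2)"
  shows "energy_rate \<Omega> \<alpha> a b a' b' \<le> - min (min d1 (d2 / 2)) (2 * \<alpha>) * dissipation \<Omega> \<phi> j a b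
           - f * energy \<Omega> \<alpha> a b + (\<alpha> + 1) * f * measure lebesgue \<Omega>"
proof -
  interpret nonlocal_kernel \<Omega> "kernel \<phi> j" by fact
  let ?M = "lebesgue_on \<Omega>" and ?\<Gamma> = "nonlocal_op \<Omega> (kernel \<phi> j)" and ?F = "nonlocal_form \<Omega> (kernel \<phi> j)"
  obtain a0 b0 B where rep: "a0 \<in> borel_measurable lebesgue" "\<And>x. \<bar>a0 x\<bar> \<le> B"
      "b0 \<in> borel_measurable lebesgue" "\<And>x. \<bar>b0 x\<bar> \<le> B" "AE x in ?M. a x = a0 x \<and> b x = b0 x"
    by (elim Linf_bounded_representatives[OF domain_sets a b])
  have meas [measurable]: "a \<in> borel_measurable ?M" "b \<in> borel_measurable ?M"
      "a0 \<in> borel_measurable ?M" "b0 \<in> borel_measurable ?M" "a' \<in> borel_measurable ?M" "b' \<in> borel_measurable ?M"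
    using Linf_measurable[OF a] Linf_measurable[OF b] a' b'
      measurable_restrict_space1[OF rep(1)] measurable_restrict_space1[OF rep(3)]
    by auto
  have [measurable]: "?\<Gamma> a0 \<in> borel_measurable ?M" "?\<Gamma> b0 \<in> borel_measurable ?M"
    using measurable_restrict_space1[OF borel_measurable_nonlocal_op[OF rep(1)]]
      measurable_restrict_space1[OF borel_measurable_nonlocal_op[OF rep(3)]]
    by auto
  have "AE x in ?M. Gamma \<Omega> \<phi> j a x = ?\<Gamma> a0 x" "AE x in ?M. Gamma \<Omega> \<phi> j b x = ?\<Gamma> b0 x"
    by (rule Gamma_AE_eq_nonlocal_op[OF K a rep(1)] Gamma_AE_eq_nonlocal_op[OF K b rep(3)],
        rule eventually_mono[OF rep(5)], simp)+
  moreover have "AE x in ?M. a x \<ge> 0 \<and> b x \<ge> 0"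
    using nonneg domain_sets by (subst AE_restrict_space_iff) auto
  moreover have "AE x in ?M. a' x = d1 * Gamma \<Omega> \<phi> j a x - a x * (b x)\<^sup>2 + f * (1 - a x)"
    "AE x in ?M. b' x = d2 * Gamma \<Omega> \<phi> j b x + a x * (b x)\<^sup>2 - (f + \<kappa>) * b x"
    using eq_a eq_b domain_sets by (simp_all add: AE_restrict_space_iff)
  ultimately have ae: "AE x in ?M. a x = a0 x \<and> b x = b0 x \<and> a0 x \<ge> 0 \<and> b0 x \<ge> 0 \<and>
      a' x = d1 * ?\<Gamma> a0 x + (- a0 x * (b0 x)\<^sup>2 + f * (1 - a0 x)) \<and>
      b' x = d2 * ?\<Gamma> b0 x + (a0 x * (b0 x)\<^sup>2 - (f + \<kappa>) * b0 x)"
    using rep(5) by eventually_elim simp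
  have nonneg0: "AE x in ?M. a0 x \<ge> 0 \<and> b0 x \<ge> 0"
    using ae by eventually_elim simp
  let ?ra = "\<lambda>x. - a0 x * (b0 x)\<^sup>2 + f * (1 - a0 x)" and ?rb = "\<lambda>x. a0 x * (b0 x)\<^sup>2 - (f + \<kappa>) * b0 x"
  have "energy_rate \<Omega> \<alpha> a b a' b' = energy_rate \<Omega> \<alpha> a0 b0 (\<lambda>x. d1 * ?\<Gamma> a0 x + ?ra x) (\<lambda>x. d2 * ?\<Gamma> b0 x + ?rb x)"
    by (rule energy_rate_cong_AE; measurable?) (use ae in \<open>eventually_elim, simp\<close>)
  also have "\<dots> \<le> - min (min d1 (d2 / 2)) (2 * \<alpha>) * (?F a0 a0 + ?F b0 b0 + (\<integral>x. (a0 x * b0 x)\<^sup>2 \<partial>?M))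
      - f * energy \<Omega> \<alpha> a0 b0 + (\<alpha> + 1) * f * measure lebesgue \<Omega>"
    unfolding \<alpha>_def by (rule energy_rate_gray_scott_le[OF pos rep(1-4) nonneg0])
  also have "\<dots> = - min (min d1 (d2 / 2)) (2 * \<alpha>) * dissipation \<Omega> \<phi> j a b
      - f * energy \<Omega> \<alpha> a b + (\<alpha> + 1) * f * measure lebesgue \<Omega>"
    using dissipation_eq_nonlocal_form(2)[OF K meas(1,2) rep] energy_cong_AE[OF meas(1-4) rep(5), of \<alpha>]
    by simp
  finally show ?thesis .
qed

lemma Yfun_L2sq_eq_dissipation:
  fixes \<phi> :: "real^'n \<Rightarrow> real"
  assumes K: "nonlocal_kernel \<Omega> (kernel \<phi> j)" and a: "a \<in> Linf \<Omega>" and b: "b \<in> Linf \<Omega>"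
  shows "Yfun \<Omega> \<phi> j a + Yfun \<Omega> \<phi> j b + L2sq \<Omega> (\<lambda>x. a x * b x) = ennreal (dissipation \<Omega> \<phi> j a b)"
proof -
  obtain a0 b0 B where "a0 \<in> borel_measurable lebesgue" "\<And>x. \<bar>a0 x\<bar> \<le> B"
      "b0 \<in> borel_measurable lebesgue" "\<And>x. \<bar>b0 x\<bar> \<le> B" "AE x in lebesgue_on \<Omega>. a x = a0 x \<and> b x = b0 x"
    by (elim Linf_bounded_representatives[OF nonlocal_kernel.domain_sets[OF K] a b])
  then show ?thesis
    by (rule dissipation_eq_nonlocal_form(1)[OF K Linf_measurable[OF a] Linf_measurable[OF b]])
qed

lemma L2sq_add_le_energy:
  assumes \<Omega>: "\<Omega> \<in> lmeasurable" and a: "a \<in> Linf \<Omega>" and b: "b \<in> Linf \<Omega>" and "3 / 2 \<le> \<alpha>"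
  shows "L2sq \<Omega> a + L2sq \<Omega> b \<le> ennreal (2 * energy \<Omega> \<alpha> a b)"
proof -
  let ?M = "lebesgue_on \<Omega>"
  have int: "integrable ?M (\<lambda>x. (a x)\<^sup>2)" "integrable ?M (\<lambda>x. (b x)\<^sup>2)" "integrable ?M (\<lambda>x. a x * b x)"
    using integrable_mult_Linf[OF \<Omega> a a] integrable_mult_Linf[OF \<Omega> b b] integrable_mult_Linf[OF \<Omega> a b]
    by (simp_all add: power2_eq_square)
  have int_energy: "integrable ?M (\<lambda>x. \<alpha> * (a x)\<^sup>2 + (a x + b x)\<^sup>2)"
  proof -
    have "integrable ?M (\<lambda>x. \<alpha> * (a x)\<^sup>2 + ((a x)\<^sup>2 + (b x)\<^sup>2 + 2 * (a x * b x)))"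
      using int by (intro Bochner_Integration.integrable_add integrable_mult_right)
    then show ?thesis by (simp only: power2_sum mult.assoc)
  qed
  have "(a x)\<^sup>2 + (b x)\<^sup>2 \<le> 2 * (\<alpha> * (a x)\<^sup>2 + (a x + b x)\<^sup>2)" for x
  proof -
    have "0 \<le> (b x + 2 * a x)\<^sup>2 + (2 * \<alpha> - 3) * (a x)\<^sup>2"
      using assms(4) by (intro add_nonneg_nonneg mult_nonneg_nonneg) auto
    then show ?thesis by (simp add: algebra_simps power2_eq_square)
  qed
  then have "(\<integral>x. (a x)\<^sup>2 + (b x)\<^sup>2 \<partial>?M) \<le> (\<integral>x. 2 * (\<alpha> * (a x)\<^sup>2 + (a x + b x)\<^sup>2) \<partial>?M)"
    by (intro integral_mono Bochner_Integration.integrable_add[OF int(1,2)] integrable_mult_right[OF int_energy])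
  also have "\<dots> = 2 * energy \<Omega> \<alpha> a b"
    unfolding energy_def by (rule integral_mult_right_zero)
  finally have "(\<integral>x. (a x)\<^sup>2 \<partial>?M) + (\<integral>x. (b x)\<^sup>2 \<partial>?M) \<le> 2 * energy \<Omega> \<alpha> a b"
    unfolding Bochner_Integration.integral_add[OF int(1,2)] .
  moreover have "L2sq \<Omega> a + L2sq \<Omega> b = ennreal ((\<integral>x. (a x)\<^sup>2 \<partial>?M) + (\<integral>x. (b x)\<^sup>2 \<partial>?M))"
    unfolding L2sq_eq_integral[OF fmeasurableD[OF \<Omega>] int(1)] L2sq_eq_integral[OF fmeasurableD[OF \<Omega>] int(2)]
    by (rule ennreal_plus[symmetric]) auto
  ultimately show ?thesis
    by (metis ennreal_leI)
qed

lemma solution_energy_inequality: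
  fixes \<phi> :: "real^'n \<Rightarrow> real"
  assumes K: "nonlocal_kernel \<Omega> (kernel \<phi> j)" and pos: "d1 > 0" "d2 > 0" "f > 0" "\<kappa> > 0"
    and sol: "is_solution \<Omega> \<phi> d1 d2 f \<kappa> u0 v0 j u v" and u0: "u0 \<in> Linf \<Omega>" and v0: "v0 \<in> Linf \<Omega>"
  defines "\<alpha> \<equiv> (d1 + d2)\<^sup>2 / (d1 * d2)"
  obtains E' where "\<And>s. s \<ge> 0 \<Longrightarrow> u s \<in> Linf \<Omega> \<and> v s \<in> Linf \<Omega>"
    and "energy \<Omega> \<alpha> (u 0) (v 0) = energy \<Omega> \<alpha> u0 v0"
    and "\<And>s. s \<ge> 0 \<Longrightarrow> ((\<lambda>s. energy \<Omega> \<alpha> (u s) (v s)) has_real_derivative E' s) (at s within {0..})"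
    and "\<And>s. s \<ge> 0 \<Longrightarrow> E' s \<le> - min (min d1 (d2 / 2)) (2 * \<alpha>) * dissipation \<Omega> \<phi> j (u s) (v s)
           - f * energy \<Omega> \<alpha> (u s) (v s) + (\<alpha> + 1) * f * measure lebesgue \<Omega>"
proof -
  interpret nonlocal_kernel \<Omega> "kernel \<phi> j" by fact
  obtain u' v' where u: "Linf_C1 \<Omega> u u'" and v: "Linf_C1 \<Omega> v v'"
    and nonneg: "\<forall>s\<ge>0. AE x\<in>\<Omega> in lebesgue. u s x \<ge> 0 \<and> v s x \<ge> 0"
    and eq_u: "\<forall>s\<ge>0. AE x\<in>\<Omega> in lebesgue.
      u' s x = d1 * Gamma \<Omega> \<phi> j (u s) x - u s x * (v s x)\<^sup>2 + f * (1 - u s x)"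
    and eq_v: "\<forall>s\<ge>0. AE x\<in>\<Omega> in lebesgue.
      v' s x = d2 * Gamma \<Omega> \<phi> j (v s) x + u s x * (v s x)\<^sup>2 - (f + \<kappa>) * v s x"
    and init: "AE x\<in>\<Omega> in lebesgue. u 0 x = u0 x \<and> v 0 x = v0 x"
    using sol unfolding is_solution_def by blast
  have Linf: "u s \<in> Linf \<Omega>" "u' s \<in> Linf \<Omega>" "v s \<in> Linf \<Omega>" "v' s \<in> Linf \<Omega>" if "s \<ge> 0" for s
    using u v that by (auto simp: Linf_C1_def)
  show ?thesis
  proof (rule that)
    show "u s \<in> Linf \<Omega> \<and> v s \<in> Linf \<Omega>" if "s \<ge> 0" for s
      using Linf[OF that] by simp
    show "energy \<Omega> \<alpha> (u 0) (v 0) = energy \<Omega> \<alpha> u0 v0"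
    proof (rule energy_cong_AE)
      show "AE x in lebesgue_on \<Omega>. u 0 x = u0 x \<and> v 0 x = v0 x"
        using init domain_sets by (subst AE_restrict_space_iff) auto
    qed (use Linf u0 v0 in \<open>auto intro: Linf_measurable\<close>)
    show "((\<lambda>s. energy \<Omega> \<alpha> (u s) (v s)) has_real_derivative energy_rate \<Omega> \<alpha> (u s) (v s) (u' s) (v' s))
        (at s within {0..})" if "s \<ge> 0" for s
      using domain_lmeasurable u v that by (rule has_real_derivative_energy)
    show "energy_rate \<Omega> \<alpha> (u s) (v s) (u' s) (v' s) \<le> - min (min d1 (d2 / 2)) (2 * \<alpha>) * dissipation \<Omega> \<phi> j (u s) (v s)
        - f * energy \<Omega> \<alpha> (u s) (v s) + (\<alpha> + 1) * f * measure lebesgue \<Omega>" if "s \<ge> 0" for s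
      unfolding \<alpha>_def
      by (rule energy_rate_le_dissipation[OF K pos Linf(1,3)[OF that] Linf_measurable[OF Linf(2)[OF that]]
            Linf_measurable[OF Linf(4)[OF that]] nonneg[rule_format, OF that] eq_u[rule_format, OF that]
            eq_v[rule_format, OF that]])
  qed
qed

lemma solution_L2sq_bound:
  fixes \<phi> :: "real^'n \<Rightarrow> real"
  assumes K: "nonlocal_kernel \<Omega> (kernel \<phi> j)" and pos: "d1 > 0" "d2 > 0" "f > 0" "\<kappa> > 0"
    and sol: "is_solution \<Omega> \<phi> d1 d2 f \<kappa> u0 v0 j u v" and u0: "u0 \<in> Linf \<Omega>" and v0: "v0 \<in> Linf \<Omega>"
    and "t \<ge> 0"
  defines "\<alpha> \<equiv> (d1 + d2)\<^sup>2 / (d1 * d2)"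
  shows "L2sq \<Omega> (u t) + L2sq \<Omega> (v t) \<le> ennreal (2 * max (energy \<Omega> \<alpha> u0 v0) ((\<alpha> + 1) * measure lebesgue \<Omega>))"
proof -
  obtain E' where Linf: "\<And>s. s \<ge> 0 \<Longrightarrow> u s \<in> Linf \<Omega> \<and> v s \<in> Linf \<Omega>"
    and E0: "energy \<Omega> \<alpha> (u 0) (v 0) = energy \<Omega> \<alpha> u0 v0"
    and deriv: "\<And>s. s \<ge> 0 \<Longrightarrow> ((\<lambda>s. energy \<Omega> \<alpha> (u s) (v s)) has_real_derivative E' s) (at s within {0..})"
    and rate: "\<And>s. s \<ge> 0 \<Longrightarrow> E' s \<le> - min (min d1 (d2 / 2)) (2 * \<alpha>) * dissipation \<Omega> \<phi> j (u s) (v s)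
           - f * energy \<Omega> \<alpha> (u s) (v s) + (\<alpha> + 1) * f * measure lebesgue \<Omega>"
    using solution_energy_inequality[OF K pos sol u0 v0, folded \<alpha>_def] by blast
  have "4 \<le> \<alpha>"
    unfolding \<alpha>_def using pos(1,2) by (rule gray_scott_weight_ge_4)
  have "energy \<Omega> \<alpha> (u t) (v t) \<le> max (energy \<Omega> \<alpha> (u 0) (v 0)) ((\<alpha> + 1) * f * measure lebesgue \<Omega> / f)"
    using pos(3) deriv _ \<open>t \<ge> 0\<close>
  proof (rule differential_inequality_bound)
    fix s :: real assume "s \<ge> 0"
    have "0 \<le> min (min d1 (d2 / 2)) (2 * \<alpha>) * dissipation \<Omega> \<phi> j (u s) (v s)"
      using pos \<open>4 \<le> \<alpha>\<close> by (simp add: dissipation_def)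
    then show "E' s \<le> (\<alpha> + 1) * f * measure lebesgue \<Omega> - f * energy \<Omega> \<alpha> (u s) (v s)"
      using rate[OF \<open>s \<ge> 0\<close>] by linarith
  qed
  then have "2 * energy \<Omega> \<alpha> (u t) (v t) \<le> 2 * max (energy \<Omega> \<alpha> u0 v0) ((\<alpha> + 1) * measure lebesgue \<Omega>)"
    using pos(3) E0 by simp
  have "L2sq \<Omega> (u t) + L2sq \<Omega> (v t) \<le> ennreal (2 * energy \<Omega> \<alpha> (u t) (v t))"
    by (rule L2sq_add_le_energy) (use Linf[OF \<open>t \<ge> 0\<close>] \<open>4 \<le> \<alpha>\<close> nonlocal_kernel.domain_lmeasurable[OF K] in auto)
  also have "\<dots> \<le> ennreal (2 * max (energy \<Omega> \<alpha> u0 v0) ((\<alpha> + 1) * measure lebesgue \<Omega>))"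
    by (rule ennreal_leI) fact
  finally show ?thesis .
qed

lemma solution_dissipation_bound:
  fixes \<phi> :: "real^'n \<Rightarrow> real"
  assumes K: "nonlocal_kernel \<Omega> (kernel \<phi> j)" and pos: "d1 > 0" "d2 > 0" "f > 0" "\<kappa> > 0"
    and sol: "is_solution \<Omega> \<phi> d1 d2 f \<kappa> u0 v0 j u v" and u0: "u0 \<in> Linf \<Omega>" and v0: "v0 \<in> Linf \<Omega>"
    and "t \<ge> 0"
  defines "\<alpha> \<equiv> (d1 + d2)\<^sup>2 / (d1 * d2)"
  defines "M \<equiv> (energy \<Omega> \<alpha> u0 v0 + (\<alpha> + 1) * f * measure lebesgue \<Omega>) / min (min d1 (d2 / 2)) (2 * \<alpha>)"
  shows "(\<integral>\<^sup>+ s\<in>{0..t}. (Yfun \<Omega> \<phi> j (u s) + Yfun \<Omega> \<phi> j (v s) + L2sq \<Omega> (\<lambda>x. u s x * v s x)) \<partial>lborel)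
           \<le> ennreal (M * (1 + t))"
proof -
  define c where "c = min (min d1 (d2 / 2)) (2 * \<alpha>)"
  define C where "C = (\<alpha> + 1) * f * measure lebesgue \<Omega>"
  obtain E' where Linf: "\<And>s. s \<ge> 0 \<Longrightarrow> u s \<in> Linf \<Omega> \<and> v s \<in> Linf \<Omega>"
    and E0: "energy \<Omega> \<alpha> (u 0) (v 0) = energy \<Omega> \<alpha> u0 v0"
    and deriv: "\<And>s. s \<ge> 0 \<Longrightarrow> ((\<lambda>s. energy \<Omega> \<alpha> (u s) (v s)) has_real_derivative E' s) (at s within {0..})"
    and rate: "\<And>s. s \<ge> 0 \<Longrightarrow> E' s \<le> - c * dissipation \<Omega> \<phi> j (u s) (v s) - f * energy \<Omega> \<alpha> (u s) (v s) + C"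
    using solution_energy_inequality[OF K pos sol u0 v0, folded \<alpha>_def c_def C_def] by blast
  have "4 \<le> \<alpha>"
    unfolding \<alpha>_def using pos(1,2) by (rule gray_scott_weight_ge_4)
  then have "c > 0" "C \<ge> 0" "energy \<Omega> \<alpha> u0 v0 \<ge> 0"
    using pos by (auto simp: c_def C_def energy_def)
  have "(\<integral>\<^sup>+ s\<in>{0..t}. (Yfun \<Omega> \<phi> j (u s) + Yfun \<Omega> \<phi> j (v s) + L2sq \<Omega> (\<lambda>x. u s x * v s x)) \<partial>lborel)
      = (\<integral>\<^sup>+ s\<in>{0..t}. ennreal (dissipation \<Omega> \<phi> j (u s) (v s)) \<partial>lborel)"
    using Linf by (intro nn_integral_cong) (simp add: indicator_def Yfun_L2sq_eq_dissipation[OF K])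
  also have "\<dots> \<le> ennreal ((energy \<Omega> \<alpha> (u 0) (v 0) + C * t) / c)"
    using \<open>c > 0\<close> less_imp_le[OF pos(3)] deriv _ _ rate \<open>t \<ge> 0\<close>
  proof (rule differential_inequality_integral_bound)
    show "energy \<Omega> \<alpha> (u s) (v s) \<ge> 0" "dissipation \<Omega> \<phi> j (u s) (v s) \<ge> 0" for s
      using \<open>4 \<le> \<alpha>\<close> by (simp_all add: energy_def dissipation_def)
  qed
  also have "\<dots> \<le> ennreal (M * (1 + t))"
  proof (rule ennreal_leI)
    have "(energy \<Omega> \<alpha> u0 v0 + C * t) / c \<le> (energy \<Omega> \<alpha> u0 v0 + C) / c * (1 + t)"
      using \<open>energy \<Omega> \<alpha> u0 v0 \<ge> 0\<close> \<open>C \<ge> 0\<close> \<open>c > 0\<close> \<open>t \<ge> 0\<close> by (simp add: field_simps)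
    then show "(energy \<Omega> \<alpha> (u 0) (v 0) + C * t) / c \<le> M * (1 + t)"
      by (simp add: E0 M_def c_def C_def)
  qed
  finally show ?thesis .
qed

theorem lemma4p1:
  fixes \<Omega> :: "(real^'n) set" and \<phi> :: "real^'n \<Rightarrow> real"
    and d1 d2 f \<kappa> \<alpha> :: real and u0 v0 :: "real^'n \<Rightarrow> real"
  assumes "CARD('n) \<ge> 2"
    and "open \<Omega>" and "connected \<Omega>" and "\<Omega> \<noteq> {}" and "bounded \<Omega>"
    and "0 < \<alpha>" and "\<alpha> < 1" and "C2alpha_boundary \<Omega> \<alpha>"
    and "d1 > 0" and "d2 > 0" and "f > 0" and "\<kappa> > 0"
    and "smooth_fun \<phi>" and "\<And>x. \<phi> x \<ge> 0"
    and "closure {x. \<phi> x \<noteq> 0} \<subseteq> ball 0 1"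
    and "\<exists>\<psi>::real \<Rightarrow> real. antimono_on {0..} \<psi> \<and> (\<forall>x. \<phi> x = \<psi> (norm x))"
    and "u0 \<in> Linf \<Omega>" and "v0 \<in> Linf \<Omega>"
    and "AE x\<in>\<Omega> in lebesgue. u0 x \<ge> 0 \<and> v0 x \<ge> 0"
  shows "\<exists>C1>0. \<forall>j\<ge>1. \<forall>u v. is_solution \<Omega> \<phi> d1 d2 f \<kappa> u0 v0 j u v \<longrightarrow>
           (\<forall>t>0. L2sq \<Omega> (u t) + L2sq \<Omega> (v t) \<le> ennreal C1 \<and>
              (\<integral>\<^sup>+ s\<in>{0..t}. (Yfun \<Omega> \<phi> j (u s) + Yfun \<Omega> \<phi> j (v s)
                                 + L2sq \<Omega> (\<lambda>x. u s x * v s x)) \<partial>lborel)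
                \<le> ennreal (C1 * (1 + t)))"
proof -
  have "\<Omega> \<in> lmeasurable"
    using assms(5,2) by (rule lmeasurable_open)
  then have kernel: "nonlocal_kernel \<Omega> (kernel \<phi> j)" for j
    using assms(13-16) by (rule nonlocal_kernel_mollifier)
  define a where "a = (d1 + d2)\<^sup>2 / (d1 * d2)"
  define M1 where "M1 = 2 * max (energy \<Omega> a u0 v0) ((a + 1) * measure lebesgue \<Omega>)"
  define M2 where "M2 = (energy \<Omega> a u0 v0 + (a + 1) * f * measure lebesgue \<Omega>) / min (min d1 (d2 / 2)) (2 * a)"
  show ?thesis
  proof (intro exI[of _ "max 1 (max M1 M2)"] conjI allI impI)
    fix j :: nat and u v :: "real \<Rightarrow> real^'n \<Rightarrow> real" and t :: real
    assume sol: "is_solution \<Omega> \<phi> d1 d2 f \<kappa> u0 v0 j u v" and "t > 0"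
    show "L2sq \<Omega> (u t) + L2sq \<Omega> (v t) \<le> ennreal (max 1 (max M1 M2))"
      using solution_L2sq_bound[OF kernel assms(9-12) sol assms(17,18) less_imp_le[OF \<open>t > 0\<close>],
          folded a_def, folded M1_def]
      by (rule order_trans) (simp add: ennreal_leI)
    show "(\<integral>\<^sup>+ s\<in>{0..t}. (Yfun \<Omega> \<phi> j (u s) + Yfun \<Omega> \<phi> j (v s) + L2sq \<Omega> (\<lambda>x. u s x * v s x)) \<partial>lborel)
        \<le> ennreal (max 1 (max M1 M2) * (1 + t))"
      using solution_dissipation_bound[OF kernel assms(9-12) sol assms(17,18) less_imp_le[OF \<open>t > 0\<close>],
          folded a_def, folded M2_def]
      by (rule order_trans) (use \<open>t > 0\<close> in \<open>auto intro!: ennreal_leI mult_right_mono\<close>)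
  qed simp
qed

end
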